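(* For every $n\in\mathbb{N}$ and every integer $d$ with $1\le d\le\sqrt n/3$, there exist a connected planar graph $G_d$ on $n$ vertices, vertices $u,v$ with $d(u,v)=d$, and a deterministic root-choice rule such that for every integer $R>2d$, Algorithm KPR$_+$ run on $G_d$ with parameter $R$ and this root-choice rule separates $u$ and $v$ with probability at most $8\rho_{uv}^4$.
   Context: Let $G=(V,E)$ be a connected unweighted planar graph, $d(\cdot,\cdot)$ its shortest-path distance, and $\rho_{uv}=d(u,v)/R$. Two vertices are separated if they lie in different output clusters. Algorithm KPR$_+$ with integer parameter $R\ge 1$: set $F=\emptyset$. For each of four phases $i=1,2,3,4$: for each connected component $C$ of $(V,E\setminus F)$ (components as at the start of the phase), choose a root $r\in C$ (according to the root-choice rule, which specifies the root of each component encountered), let the level of $x\in C$ be its distance from $r$ within $C$, sample $k$ uniformly from $\{0,\dots,R-1\}$ independently, and add to $F$ every edge of $C$ joining a vertex at level $\ell$ to a vertex at level $\ell+1$ with $\ell\equiv k\pmod R$. Output the connected components of $(V,E\setminus F)$. *)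

theory Defs
  imports "HOL-Probability.Probability"
begin

definition graph :: "'a set \<Rightarrow> 'a set set \<Rightarrow> bool" where
  "graph V E \<longleftrightarrow> finite V \<and> (\<forall>e\<in>E. \<exists>x y. x \<noteq> y \<and> x \<in> V \<and> y \<in> V \<and> e = {x, y})"

definition walk :: "'a set set \<Rightarrow> 'a list \<Rightarrow> bool" where
  "walk E p \<longleftrightarrow> p \<noteq> [] \<and> (\<forall>i. Suc i < length p \<longrightarrow> {p ! i, p ! Suc i} \<in> E)"

definition gconn :: "'a set set \<Rightarrow> 'a \<Rightarrow> 'a \<Rightarrow> bool" where
  "gconn E x y \<longleftrightarrow> (\<exists>p. walk E p \<and> hd p = x \<and> last p = y)"

definition gdist :: "'a set set \<Rightarrow> 'a \<Rightarrow> 'a \<Rightarrow> nat" where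
  "gdist E x y = (LEAST k. \<exists>p. walk E p \<and> hd p = x \<and> last p = y \<and> length p = Suc k)"

definition connected_graph :: "'a set \<Rightarrow> 'a set set \<Rightarrow> bool" where
  "connected_graph V E \<longleftrightarrow> V \<noteq> {} \<and> (\<forall>x\<in>V. \<forall>y\<in>V. gconn E x y)"

definition components :: "'a set \<Rightarrow> 'a set set \<Rightarrow> 'a set set" where
  "components V E' = (\<lambda>x. {y \<in> V. gconn E' x y}) ` V"

definition planar_drawing ::
  "'a set \<Rightarrow> 'a set set \<Rightarrow> ('a \<Rightarrow> complex) \<Rightarrow> ('a set \<Rightarrow> real \<Rightarrow> complex) \<Rightarrow> bool" where
  "planar_drawing V E f \<gamma> \<longleftrightarrow>
     inj_on f V \<and>
     (\<forall>e\<in>E. arc (\<gamma> e) \<and>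
        (\<exists>x y. e = {x, y} \<and> pathstart (\<gamma> e) = f x \<and> pathfinish (\<gamma> e) = f y) \<and>
        path_image (\<gamma> e) \<inter> f ` V = f ` e) \<and>
     (\<forall>e\<in>E. \<forall>e'\<in>E. e \<noteq> e' \<longrightarrow> path_image (\<gamma> e) \<inter> path_image (\<gamma> e') \<subseteq> f ` (e \<inter> e'))"

definition planar :: "'a set \<Rightarrow> 'a set set \<Rightarrow> bool" where
  "planar V E \<longleftrightarrow> (\<exists>f \<gamma>. planar_drawing V E f \<gamma>)"

text \<open>A rt-choice rule gets the phase number i (1..4), the current set F of
  removed edges and a component C of (V, E - F), and returns the root of C.\<close>

type_synonym 'a root_rule = "nat \<Rightarrow> 'a set set \<Rightarrow> 'a set \<Rightarrow> 'a"

definition valid_root_rule :: "'a set \<Rightarrow> 'a set set \<Rightarrow> 'a root_rule \<Rightarrow> bool" where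
  "valid_root_rule V E rt \<longleftrightarrow>
     (\<forall>i F C. F \<subseteq> E \<longrightarrow> C \<in> components V (E - F) \<longrightarrow> rt i F C \<in> C)"

definition cut_edges :: "'a set set \<Rightarrow> 'a set \<Rightarrow> 'a \<Rightarrow> nat \<Rightarrow> nat \<Rightarrow> 'a set set" where
  "cut_edges E' C r R k =
     {e \<in> E'. e \<subseteq> C \<and> (\<exists>x y. e = {x, y} \<and> gdist E' r y = Suc (gdist E' r x)
                                 \<and> gdist E' r x mod R = k mod R)}"

definition kpr_phase ::
  "'a set \<Rightarrow> 'a set set \<Rightarrow> nat \<Rightarrow> 'a root_rule \<Rightarrow> nat \<Rightarrow> 'a set set \<Rightarrow> 'a set set pmf" where
  "kpr_phase V E R rt i F =
     map_pmf (\<lambda>k. F \<union> (\<Union>C\<in>components V (E - F). cut_edges (E - F) C (rt i F C) R (k C)))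
             (Pi_pmf (components V (E - F)) 0 (\<lambda>_. pmf_of_set {0..<R}))"

fun kpr_iter :: "'a set \<Rightarrow> 'a set set \<Rightarrow> nat \<Rightarrow> 'a root_rule \<Rightarrow> nat \<Rightarrow> 'a set set pmf" where
  "kpr_iter V E R rt 0 = return_pmf {}"
| "kpr_iter V E R rt (Suc i) = bind_pmf (kpr_iter V E R rt i) (kpr_phase V E R rt (Suc i))"

definition kpr_sep_prob ::
  "'a set \<Rightarrow> 'a set set \<Rightarrow> nat \<Rightarrow> 'a root_rule \<Rightarrow> 'a \<Rightarrow> 'a \<Rightarrow> real" where
  "kpr_sep_prob V E R rt u v =
     measure_pmf.prob (kpr_iter V E R rt 4) {F. \<not> gconn (E - F) u v}"

end

theory Submission
  imports Defs "HOL-Library.Countable"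
begin

text \<open>The graph is a cycle of length 3d, on which u and v are at distance d, together with two
  hubs, each joined to every cycle vertex by a path (spoke) of length d; a pendant path pads the
  vertex count to n.  The root rule roots u's component at a hub as long as the cycle and that
  hub's spokes are intact, then at the cycle vertex at distance d from v on the long arc, then at u.
  For these roots the layers of the graph (the two arcs of the cycle between u and v and the two
  spoke systems) lie in level bands whose widths and positions ensure that one phase destroys at
  most one layer, and does so only if the offset of u's component lies in a fixed set of at most
  2d, d, 3d/2 or d residues when four, three, two or one layers are left.  Separating u from v
  requires destroying all four layers in the four phases, which has probability at most
  3 d^4 / R^4.  Planarity comes from a two-page book embedding.\<close>

section \<open>Walks and distances\<close>

definition adj :: "'a set set \<Rightarrow> 'a \<Rightarrow> 'a \<Rightarrow> bool" where
  "adj E x y \<longleftrightarrow> {x, y} \<in> E"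

lemma adj_sym: "adj E x y \<Longrightarrow> adj E y x"
  by (simp add: adj_def insert_commute)

lemma walk_Cons: "walk E (x # p) \<longleftrightarrow> (p = [] \<or> (walk E p \<and> {x, hd p} \<in> E))"
proof
  assume w: "walk E (x # p)"
  show "p = [] \<or> (walk E p \<and> {x, hd p} \<in> E)"
  proof (cases p)
    case Nil then show ?thesis by simp
  next
    case (Cons y q)
    have 1: "{x, hd p} \<in> E" using w Cons unfolding walk_def by (auto dest: spec[of _ 0])
    have "walk E p" unfolding walk_def
    proof (intro conjI allI impI)
      show "p \<noteq> []" using Cons by simp
      fix i assume "Suc i < length p"
      then have "Suc (Suc i) < length (x # p)" by simp
      then show "{p ! i, p ! Suc i} \<in> E" using w unfolding walk_def by (auto dest: spec[of _ "Suc i"])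
    qed
    with 1 show ?thesis by simp
  qed
next
  assume h: "p = [] \<or> (walk E p \<and> {x, hd p} \<in> E)"
  show "walk E (x # p)"
  proof (cases p)
    case Nil then show ?thesis by (simp add: walk_def)
  next
    case (Cons y q)
    with h have wp: "walk E p" and e: "{x, y} \<in> E" by auto
    show ?thesis unfolding walk_def
    proof (intro conjI allI impI)
      fix i assume i: "Suc i < length (x # p)"
      show "{(x # p) ! i, (x # p) ! Suc i} \<in> E"
      proof (cases i)
        case 0 then show ?thesis using e Cons by simp
      next
        case (Suc i')
        then show ?thesis using wp i unfolding walk_def by simp
      qed
    qed simp
  qed
qed

lemma walk_iff_relpowp:
  "(\<exists>p. walk E p \<and> hd p = x \<and> last p = y \<and> length p = Suc k) \<longleftrightarrow> (adj E ^^ k) x y"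
proof (induction k arbitrary: x)
  case 0
  show ?case
  proof
    assume "\<exists>p. walk E p \<and> hd p = x \<and> last p = y \<and> length p = Suc 0"
    then obtain p where "hd p = x" "last p = y" "length p = 1" by auto
    then show "(adj E ^^ 0) x y" by (cases p) auto
  next
    assume "(adj E ^^ 0) x y"
    then show "\<exists>p. walk E p \<and> hd p = x \<and> last p = y \<and> length p = Suc 0"
      by (intro exI[of _ "[x]"]) (auto simp: walk_def)
  qed
next
  case (Suc k)
  show ?case
  proof
    assume "\<exists>p. walk E p \<and> hd p = x \<and> last p = y \<and> length p = Suc (Suc k)"
    then obtain p where p: "walk E p" "hd p = x" "last p = y" "length p = Suc (Suc k)" by auto
    then obtain q where q: "p = x # q" by (cases p) auto
    with p have qne: "q \<noteq> []" by auto
    with p q have "walk E q" "{x, hd q} \<in> E" by (auto simp: walk_Cons)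
    moreover have "last q = y" "length q = Suc k" using p q qne by auto
    ultimately have "(adj E ^^ k) (hd q) y" "adj E x (hd q)" using Suc.IH[of "hd q"] unfolding adj_def[symmetric] by blast+
    then show "(adj E ^^ Suc k) x y" by (meson relpowp_Suc_I2)
  next
    assume "(adj E ^^ Suc k) x y"
    then obtain z where z: "adj E x z" "(adj E ^^ k) z y" by (meson relpowp_Suc_D2)
    from Suc.IH[of z] z obtain q where q: "walk E q" "hd q = z" "last q = y" "length q = Suc k" by auto
    then have "q \<noteq> []" by auto
    then have "walk E (x # q)" using q z by (auto simp: walk_Cons adj_def)
    then show "\<exists>p. walk E p \<and> hd p = x \<and> last p = y \<and> length p = Suc (Suc k)"
      using q \<open>q \<noteq> []\<close> by (intro exI[of _ "x # q"]) auto
  qed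
qed

lemma gdist_eq_Least: "gdist E x y = (LEAST k. (adj E ^^ k) x y)"
  unfolding gdist_def walk_iff_relpowp ..

lemma gconn_iff_relpowp: "gconn E x y \<longleftrightarrow> (\<exists>k. (adj E ^^ k) x y)"
proof
  assume "gconn E x y"
  then obtain p where p: "walk E p" "hd p = x" "last p = y" unfolding gconn_def by auto
  then have "length p = Suc (length p - 1)" by (auto simp: walk_def)
  then show "\<exists>k. (adj E ^^ k) x y" using p walk_iff_relpowp[of E x y "length p - 1"] by blast
next
  assume "\<exists>k. (adj E ^^ k) x y"
  then obtain k where "(adj E ^^ k) x y" by blast
  then show "gconn E x y" unfolding gconn_def using walk_iff_relpowp[of E x y k] by blast
qed

lemma gconn_iff_rtranclp: "gconn E x y \<longleftrightarrow> (adj E)\<^sup>*\<^sup>* x y"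
  by (simp add: gconn_iff_relpowp rtranclp_power)

lemma gconn_refl: "gconn E x x"
  by (simp add: gconn_iff_rtranclp)

lemma gconn_trans: "gconn E x y \<Longrightarrow> gconn E y z \<Longrightarrow> gconn E x z"
  by (simp add: gconn_iff_rtranclp)

lemma adj_relpowp_sym: "(adj E ^^ k) x y \<Longrightarrow> (adj E ^^ k) y x"
proof (induction k arbitrary: x)
  case (Suc k)
  then obtain z where "adj E x z" "(adj E ^^ k) z y" by (meson relpowp_Suc_D2)
  with Suc.IH show ?case by (meson adj_sym relpowp_Suc_I)
qed simp

lemma gconn_sym: "gconn E x y \<Longrightarrow> gconn E y x"
  unfolding gconn_iff_relpowp by (meson adj_relpowp_sym)

lemma relpowp_imp_gconn: "(adj E ^^ k) x y \<Longrightarrow> gconn E x y"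
  unfolding gconn_iff_relpowp by blast

lemma gdist_le_relpowp: "(adj E ^^ k) x y \<Longrightarrow> gdist E x y \<le> k"
  unfolding gdist_eq_Least by (rule Least_le)

lemma relpowp_gdist: "gconn E x y \<Longrightarrow> (adj E ^^ gdist E x y) x y"
  unfolding gdist_eq_Least gconn_iff_relpowp by (rule LeastI_ex)

lemma relpowp_chain:
  assumes "\<And>k. a \<le> k \<Longrightarrow> k < b \<Longrightarrow> adj E' (g k) (g (Suc k))" and "a \<le> b"
  shows "(adj E' ^^ (b - a)) (g a) (g b)"
  using assms
proof (induction b)
  case 0 then show ?case by simp
next
  case (Suc b)
  show ?case
  proof (cases "a = Suc b")
    case True then show ?thesis by simp
  next
    case False
    then have ab: "a \<le> b" using Suc.prems(2) by simp
    have IH: "(adj E' ^^ (b - a)) (g a) (g b)" using Suc.IH[OF _ ab] Suc.prems(1) by simp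
    have "adj E' (g b) (g (Suc b))" using Suc.prems(1)[of b] ab by simp
    with IH have "(adj E' ^^ Suc (b - a)) (g a) (g (Suc b))" by (rule relpowp_Suc_I)
    moreover have "Suc (b - a) = Suc b - a" using ab by simp
    ultimately show ?thesis by simp
  qed
qed

definition unit_lipschitz :: "'a set set \<Rightarrow> ('a \<Rightarrow> int) \<Rightarrow> bool" where
  "unit_lipschitz E \<phi> \<longleftrightarrow> (\<forall>a b. {a, b} \<in> E \<longrightarrow> \<phi> b \<le> \<phi> a + 1)"

lemma unit_lipschitz_relpowp:
  assumes "unit_lipschitz E \<phi>" "E' \<subseteq> E" "(adj E' ^^ k) x y"
  shows "\<phi> y \<le> \<phi> x + int k"
  using assms(3)
proof (induction k arbitrary: y)
  case (Suc k)
  from Suc.prems obtain z where z: "(adj E' ^^ k) x z" "adj E' z y" by (rule relpowp_Suc_E)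
  then have "{z, y} \<in> E" using assms(2) unfolding adj_def by blast
  with assms(1) have "\<phi> y \<le> \<phi> z + 1" unfolding unit_lipschitz_def by blast
  with Suc.IH[OF z(1)] show ?case by simp
qed simp

lemma gdist_between:
  assumes "(adj (E - F) ^^ k) r x" "k \<le> hi" "unit_lipschitz E \<phi>" "int lo \<le> \<phi> x - \<phi> r"
  shows "gconn (E - F) r x \<and> lo \<le> gdist (E - F) r x \<and> gdist (E - F) r x \<le> hi"
proof -
  have conn: "gconn (E - F) r x" using assms(1) by (rule relpowp_imp_gconn)
  have "\<phi> x \<le> \<phi> r + int (gdist (E - F) r x)"
    using unit_lipschitz_relpowp[OF assms(3) _ relpowp_gdist[OF conn]] by blast
  moreover have "gdist (E - F) r x \<le> k" using assms(1) by (rule gdist_le_relpowp)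
  ultimately show ?thesis using conn assms(2,4) by simp
qed

lemma gdist_at_most:
  assumes "(adj E' ^^ k) r x" "k \<le> hi"
  shows "gconn E' r x \<and> gdist E' r x \<le> hi"
  using relpowp_imp_gconn[OF assms(1)] gdist_le_relpowp[OF assms(1)] assms(2) by simp

definition component_of :: "'a set \<Rightarrow> 'a set set \<Rightarrow> 'a \<Rightarrow> 'a set" where
  "component_of V E' x = {y \<in> V. gconn E' x y}"

lemma components_eq_image: "components V E' = component_of V E' ` V"
  unfolding components_def component_of_def ..

lemma component_of_in_components: "x \<in> V \<Longrightarrow> component_of V E' x \<in> components V E'"
  by (simp add: components_eq_image)

lemma self_in_component_of: "x \<in> V \<Longrightarrow> x \<in> component_of V E' x"
  by (simp add: component_of_def gconn_refl)

lemma components_eq_component_of: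
  assumes "C \<in> components V E'" "z \<in> C"
  shows "C = component_of V E' z"
proof -
  from assms(1) obtain x where "C = component_of V E' x"
    unfolding components_eq_image by blast
  with assms(2) have "gconn E' x z" by (simp add: component_of_def)
  then have "gconn E' x y \<longleftrightarrow> gconn E' z y" for y
    by (meson gconn_sym gconn_trans)
  then show ?thesis
    using \<open>C = component_of V E' x\<close> by (simp add: component_of_def)
qed

lemma finite_components: "finite V \<Longrightarrow> finite (components V E')"
  by (simp add: components_eq_image)

lemma graph_edge_subset:
  assumes "graph V E" "e \<in> E"
  shows "e \<subseteq> V"
proof -
  from assms obtain a b where "a \<in> V" "b \<in> V" "e = {a, b}" unfolding graph_def by meson
  then show ?thesis by simp
qed

section \<open>One phase of KPR+\<close>

definition phase_cut ::
  "'a set \<Rightarrow> 'a set set \<Rightarrow> nat \<Rightarrow> 'a root_rule \<Rightarrow> nat \<Rightarrow> 'a set set \<Rightarrow> ('a set \<Rightarrow> nat) \<Rightarrow> 'a set set" where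
  "phase_cut V E R rt i F k = F \<union> (\<Union>C\<in>components V (E - F). cut_edges (E - F) C (rt i F C) R (k C))"

lemma kpr_phase_eq_map_pmf:
  "kpr_phase V E R rt i F =
     map_pmf (phase_cut V E R rt i F) (Pi_pmf (components V (E - F)) 0 (\<lambda>_. pmf_of_set {0..<R}))"
  unfolding kpr_phase_def phase_cut_def ..

lemma set_pmf_Pi_pmf_offsets:
  fixes R :: nat
  assumes "finite A" "R > 0" "k \<in> set_pmf (Pi_pmf A 0 (\<lambda>_. pmf_of_set {0..<R}))"
  shows "\<forall>C\<in>A. k C < R"
proof -
  have "set_pmf (pmf_of_set {0..<R}) = {0..<R}" using assms(2) by (simp add: set_pmf_of_set)
  with assms show ?thesis unfolding set_Pi_pmf[OF assms(1)] PiE_dflt_def by auto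
qed

lemma set_pmf_kpr_phase:
  assumes "finite (components V (E - F))" "R > 0" "F' \<in> set_pmf (kpr_phase V E R rt i F)"
  obtains k where "\<forall>C\<in>components V (E - F). k C < R" "F' = phase_cut V E R rt i F k"
proof -
  from assms(3) obtain k where "k \<in> set_pmf (Pi_pmf (components V (E - F)) 0 (\<lambda>_. pmf_of_set {0..<R}))"
    "F' = phase_cut V E R rt i F k"
    unfolding kpr_phase_eq_map_pmf by auto
  with set_pmf_Pi_pmf_offsets[OF assms(1,2)] that show ?thesis by blast
qed

definition level_band :: "'a set set \<Rightarrow> 'a \<Rightarrow> 'a set set \<Rightarrow> nat \<Rightarrow> nat \<Rightarrow> bool" where
  "level_band E' r X lo hi \<longleftrightarrow>
     (\<forall>e\<in>X. \<forall>x\<in>e. gconn E' r x \<and> lo \<le> gdist E' r x \<and> gdist E' r x \<le> hi)"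

text \<open>An edge joins levels l and l+1 with l \<le> hi - 1 < R, so it is cut only if l is the offset
  itself; hence an offset outside [lo, hi) spares the whole band.\<close>

lemma phase_cut_spares_band:
  fixes k :: "'a set \<Rightarrow> nat"
  assumes G: "graph V E" and uV: "u \<in> V" and XF: "X \<subseteq> E - F"
    and kR: "\<forall>C\<in>components V (E - F). k C < R"
    and ur: "gconn (E - F) u (rt i F (component_of V (E - F) u))"
    and band: "level_band (E - F) (rt i F (component_of V (E - F) u)) X lo hi" and hiR: "hi \<le> R"
    and k_out: "\<not> (lo \<le> k (component_of V (E - F) u) \<and> k (component_of V (E - F) u) < hi)"
  shows "X \<inter> phase_cut V E R rt i F k = {}"
proof (rule ccontr)
  define Cu where "Cu = component_of V (E - F) u"
  define r where "r = rt i F Cu"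
  assume "X \<inter> phase_cut V E R rt i F k \<noteq> {}"
  then obtain e C where eX: "e \<in> X" and C: "C \<in> components V (E - F)"
    and ec: "e \<in> cut_edges (E - F) C (rt i F C) R (k C)"
    using XF unfolding phase_cut_def by blast
  from ec obtain x y where eC: "e \<subseteq> C" and exy: "e = {x, y}"
    and lv: "gdist (E - F) (rt i F C) y = Suc (gdist (E - F) (rt i F C) x)"
    and md: "gdist (E - F) (rt i F C) x mod R = k C mod R"
    unfolding cut_edges_def by blast
  have xe: "x \<in> e" and ye: "y \<in> e" using exy by auto
  have xV: "x \<in> V" using graph_edge_subset[OF G] eX XF xe by blast
  have "gconn (E - F) r x" using band eX xe unfolding level_band_def r_def Cu_def by blast
  then have "x \<in> Cu" using ur xV unfolding r_def Cu_def component_of_def by (blast intro: gconn_trans)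
  moreover have "Cu \<in> components V (E - F)" unfolding Cu_def by (rule component_of_in_components[OF uV])
  ultimately have CC: "C = Cu"
    using eC xe C components_eq_component_of by (metis subsetD)
  have l1: "lo \<le> gdist (E - F) r x" and l2: "gdist (E - F) r y \<le> hi"
    using band eX xe ye unfolding level_band_def r_def Cu_def by blast+
  have lvr: "gdist (E - F) r y = Suc (gdist (E - F) r x)" using lv unfolding CC r_def .
  have "k Cu < R" using kR \<open>Cu \<in> components V (E - F)\<close> by blast
  moreover have "gdist (E - F) r x < R" using l2 lvr hiR by simp
  ultimately have "gdist (E - F) r x = k Cu" using md unfolding CC r_def by simp
  then show False using k_out l1 l2 lvr unfolding Cu_def by simp
qed

text \<open>Only the offset of u's component matters, and it is uniform on {0..<R}.\<close>

lemma prob_kpr_phase_fails: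
  assumes fin: "finite (components V (E - F))" and R: "R > 0" and uV: "u \<in> V"
    and good: "\<And>k. \<forall>C\<in>components V (E - F). k C < R \<Longrightarrow> b \<le> k (component_of V (E - F) u) \<Longrightarrow>
        P (phase_cut V E R rt i F k)"
  shows "measure_pmf.prob (kpr_phase V E R rt i F) {F'. \<not> P F'} \<le> real b / real R"
proof -
  define Cs where "Cs = components V (E - F)"
  define Q where "Q = Pi_pmf Cs 0 (\<lambda>_. pmf_of_set {0..<R})"
  define Cu where "Cu = component_of V (E - F) u"
  have CuC: "Cu \<in> Cs" unfolding Cu_def Cs_def by (rule component_of_in_components[OF uV])
  have "measure_pmf.prob (kpr_phase V E R rt i F) {F'. \<not> P F'}
      = measure_pmf.prob Q (phase_cut V E R rt i F -` {F'. \<not> P F'} \<inter> set_pmf Q)"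
    unfolding kpr_phase_eq_map_pmf Q_def Cs_def by (simp add: measure_Int_set_pmf)
  also have "\<dots> \<le> measure_pmf.prob Q {k. k Cu < b}"
  proof (rule measure_pmf.finite_measure_mono)
    show "phase_cut V E R rt i F -` {F'. \<not> P F'} \<inter> set_pmf Q \<subseteq> {k. k Cu < b}"
      using good set_pmf_Pi_pmf_offsets[OF fin R] unfolding Q_def Cs_def Cu_def by fastforce
  qed simp
  also have "\<dots> = measure_pmf.prob (map_pmf (\<lambda>k. k Cu) Q) {..<b}"
    by (simp add: vimage_def)
  also have "map_pmf (\<lambda>k. k Cu) Q = pmf_of_set {0..<R}"
    unfolding Q_def using Pi_pmf_component[of Cs Cu 0] fin CuC unfolding Cs_def by simp
  also have "measure_pmf.prob (pmf_of_set {0..<R}) {..<b} = real (card ({0..<R} \<inter> {..<b})) / real R"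
    using R by (simp add: measure_pmf_of_set)
  also have "\<dots> \<le> real b / real R"
    using card_mono[of "{..<b}" "{0..<R} \<inter> {..<b}"] by (simp add: divide_right_mono)
  finally show ?thesis .
qed

lemma prob_bind_pmf_le:
  assumes "\<And>x. x \<in> set_pmf M \<Longrightarrow> measure_pmf.prob (N x) A \<le> c * indicator B x" and c: "c \<ge> 0"
  shows "measure_pmf.prob (bind_pmf M N) A \<le> c * measure_pmf.prob M B"
proof -
  have "emeasure (measure_pmf (bind_pmf M N)) A = (\<integral>\<^sup>+x. emeasure (measure_pmf (N x)) A \<partial>measure_pmf M)"
    by simp
  also have "\<dots> \<le> (\<integral>\<^sup>+x. ennreal c * indicator B x \<partial>measure_pmf M)"
  proof (intro nn_integral_mono_AE AE_pmfI)
    fix x assume "x \<in> set_pmf M"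
    from assms(1)[OF this] show "emeasure (measure_pmf (N x)) A \<le> ennreal c * indicator B x"
      by (cases "x \<in> B") (auto simp: measure_pmf.emeasure_eq_measure ennreal_leI
          intro: antisym[OF _ measure_nonneg])
  qed
  also have "\<dots> = ennreal (c * measure_pmf.prob M B)"
    using c by (simp add: nn_integral_cmult_indicator measure_pmf.emeasure_eq_measure ennreal_mult')
  finally show ?thesis
    using c by (simp add: measure_pmf.emeasure_eq_measure ennreal_le_iff)
qed

lemma prob_bind_pmf_level_drop:
  fixes lv :: "'b \<Rightarrow> nat"
  assumes supp: "\<And>x. x \<in> set_pmf M \<Longrightarrow> m \<le> lv x + t"
    and step: "\<And>x y. x \<in> set_pmf M \<Longrightarrow> y \<in> set_pmf (N x) \<Longrightarrow> lv x \<le> Suc (lv y)"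
    and drop: "\<And>x. x \<in> set_pmf M \<Longrightarrow> lv x = m - t \<Longrightarrow> measure_pmf.prob (N x) {y. lv y < lv x} \<le> q"
    and q: "q \<ge> 0"
  shows "measure_pmf.prob (bind_pmf M N) {y. lv y + Suc t \<le> m} \<le> q * measure_pmf.prob M {x. lv x + t \<le> m}"
proof (rule prob_bind_pmf_le[OF _ q])
  fix x assume x: "x \<in> set_pmf M"
  show "measure_pmf.prob (N x) {y. lv y + Suc t \<le> m} \<le> q * indicator {x. lv x + t \<le> m} x"
  proof (cases "lv x + t \<le> m")
    case True
    then have lx: "lv x = m - t" using supp[OF x] by simp
    have "measure_pmf.prob (N x) {y. lv y + Suc t \<le> m} \<le> measure_pmf.prob (N x) {y. lv y < lv x}"
      by (rule measure_pmf.finite_measure_mono) (use lx in auto)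
    also have "\<dots> \<le> q" using drop[OF x lx] .
    finally show ?thesis using True by simp
  next
    case False
    have "{y. lv y + Suc t \<le> m} \<inter> set_pmf (N x) = {}"
      using step[OF x] False by fastforce
    then have "measure_pmf.prob (N x) {y. lv y + Suc t \<le> m} = 0"
      by (metis measure_Int_set_pmf measure_empty)
    then show ?thesis using False by simp
  qed
qed

lemma prob_level_drops:
  fixes it :: "nat \<Rightarrow> 'b pmf" and ph :: "nat \<Rightarrow> 'b \<Rightarrow> 'b pmf" and lv :: "'b \<Rightarrow> nat" and p :: "nat \<Rightarrow> real"
  assumes it0: "it 0 = return_pmf start" and itS: "\<And>t. it (Suc t) = bind_pmf (it t) (ph (Suc t))"
    and start: "lv start = m"
    and step: "\<And>i x y. 1 \<le> lv x \<Longrightarrow> y \<in> set_pmf (ph i x) \<Longrightarrow> lv x \<le> Suc (lv y)"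
    and drop: "\<And>i x. 1 \<le> lv x \<Longrightarrow> measure_pmf.prob (ph i x) {y. lv y < lv x} \<le> p (lv x)"
    and p: "\<And>j. p j \<ge> 0"
    and t: "t \<le> m"
  shows "(\<forall>x\<in>set_pmf (it t). m \<le> lv x + t)
           \<and> measure_pmf.prob (it t) {x. lv x + t \<le> m} \<le> (\<Prod>j\<in>{m - t<..m}. p j)"
  using t
proof (induction t)
  case 0
  show ?case using start by (simp add: it0)
next
  case (Suc t)
  then have tm: "t < m" by simp
  with Suc.IH have IH: "\<forall>x\<in>set_pmf (it t). m \<le> lv x + t"
    "measure_pmf.prob (it t) {x. lv x + t \<le> m} \<le> (\<Prod>j\<in>{m - t<..m}. p j)" by auto
  have lv1: "1 \<le> lv x" if "x \<in> set_pmf (it t)" for x using IH(1) that tm by fastforce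
  have "\<forall>y\<in>set_pmf (it (Suc t)). m \<le> lv y + Suc t"
    using IH(1) step lv1 unfolding itS by fastforce
  moreover have "measure_pmf.prob (it (Suc t)) {y. lv y + Suc t \<le> m}
      \<le> p (m - t) * measure_pmf.prob (it t) {x. lv x + t \<le> m}"
    unfolding itS
  proof (rule prob_bind_pmf_level_drop[OF _ _ _ p])
    fix x assume x: "x \<in> set_pmf (it t)" and "lv x = m - t"
    then show "measure_pmf.prob (ph (Suc t) x) {y. lv y < lv x} \<le> p (m - t)"
      using drop[OF lv1[OF x]] by metis
  qed (use IH(1) step lv1 in auto)
  moreover have "p (m - t) * (\<Prod>j\<in>{m - t<..m}. p j) = (\<Prod>j\<in>{m - Suc t<..m}. p j)"
  proof -
    have "{m - Suc t<..m} = insert (m - t) {m - t<..m}" using tm by auto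
    then show ?thesis by simp
  qed
  ultimately show ?case using mult_left_mono[OF IH(2) p] by (metis (no_types, lifting) order_trans)
qed

section \<open>Two-page book embeddings are planar\<close>

definition crosses :: "('a \<Rightarrow> real) \<Rightarrow> 'a set \<Rightarrow> 'a set \<Rightarrow> bool" where
  "crosses pos e e' \<longleftrightarrow>
     (\<exists>x y x' y'. e = {x, y} \<and> e' = {x', y'} \<and> pos x < pos x' \<and> pos x' < pos y \<and> pos y < pos y')"

definition arch :: "real \<Rightarrow> real \<Rightarrow> real \<Rightarrow> real \<Rightarrow> complex" where
  "arch l h s t = of_real (l + t * (h - l)) + \<i> * of_real (s * (t * (h - l)) * ((1 - t) * (h - l)))"

lemma arch_Re [simp]: "Re (arch l h s t) = l + t * (h - l)"
  by (simp add: arch_def)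

lemma arch_Im [simp]: "Im (arch l h s t) = s * (t * (h - l)) * ((1 - t) * (h - l))"
  by (simp add: arch_def)

lemma arch_0 [simp]: "arch l h s 0 = of_real l"
  by (simp add: arch_def)

lemma arch_1 [simp]: "arch l h s 1 = of_real h"
  by (simp add: arch_def)

lemma arc_arch: "l < h \<Longrightarrow> arc (arch l h s)"
proof -
  assume lh: "l < h"
  have "path (arch l h s)" unfolding path_def arch_def by (intro continuous_intros)
  moreover have "inj_on (arch l h s) {0..1}"
  proof (rule inj_onI)
    fix t1 t2 assume "arch l h s t1 = arch l h s t2"
    then have "Re (arch l h s t1) = Re (arch l h s t2)" by simp
    then show "t1 = t2" using lh by simp
  qed
  ultimately show ?thesis by (simp add: arc_def)
qed

lemma path_image_arch:
  assumes "l < h" "z \<in> path_image (arch l h s)"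
  shows "l \<le> Re z \<and> Re z \<le> h \<and> Im z = s * ((Re z - l) * (h - Re z))"
proof -
  from assms(2) obtain t where t: "t \<in> {0..1}" "z = arch l h s t" unfolding path_image_def by auto
  have "Re z - l = t * (h - l)" "h - Re z = (1 - t) * (h - l)" using t by (simp_all add: algebra_simps)
  moreover have "0 \<le> t * (h - l)" "0 \<le> (1 - t) * (h - l)" using t assms(1) by auto
  ultimately show ?thesis using t by (simp add: mult.assoc)
qed

lemma nested_arches_meet:
  fixes l h l' h' X :: real
  assumes "l < h" "l' < h'" "l \<le> l'" "h' \<le> h" "l' \<le> X" "X \<le> h'"
    and eq: "(X - l) * (h - X) = (X - l') * (h' - X)" and "(l, h) \<noteq> (l', h')"
  shows "X = l' \<and> l' = l \<or> X = h' \<and> h' = h"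
proof -
  have "((X - l) * (h - X) - (X - l') * (h' - X)) * (h' - l')
      = (h' - X) * (l' - l) * (h - l') + (X - l') * (h' - l) * (h - h')"
    by (simp add: algebra_simps)
  with eq have sum0: "(h' - X) * (l' - l) * (h - l') + (X - l') * (h' - l) * (h - h') = 0" by simp
  have "0 \<le> (h' - X) * (l' - l) * (h - l')" "0 \<le> (X - l') * (h' - l) * (h - h')"
    using assms by simp_all
  with sum0 have "(h' - X) * (l' - l) * (h - l') = 0" "(X - l') * (h' - l) * (h - h') = 0"
    by linarith+
  moreover have "h - l' > 0" "h' - l > 0" using assms by auto
  ultimately have "X = h' \<or> l' = l" "X = l' \<or> h = h'" by auto
  then show ?thesis using assms by auto
qed

text \<open>Two distinct arches on the same side of the axis whose intervals do not interleave, or on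
  opposite sides, meet only on the axis, hence at common endpoints.\<close>

lemma arches_meet:
  fixes l h l' h' X s s' :: real
  assumes lh: "l < h" "l' < h'" and X: "l \<le> X" "X \<le> h" "l' \<le> X" "X \<le> h'"
    and s: "s = 1 \<or> s = -1" "s' = 1 \<or> s' = -1"
    and eq: "s * ((X - l) * (h - X)) = s' * ((X - l') * (h' - X))"
    and nc: "s = s' \<Longrightarrow> \<not> (l < l' \<and> l' < h \<and> h < h')" "s = s' \<Longrightarrow> \<not> (l' < l \<and> l < h' \<and> h' < h)"
    and ne: "(l, h) \<noteq> (l', h')"
  shows "(X = l \<or> X = h) \<and> (X = l' \<or> X = h')"
proof (cases "s = s'")
  case False
  then have "(X - l) * (h - X) + (X - l') * (h' - X) = 0" using eq s by auto
  moreover have "0 \<le> (X - l) * (h - X)" "0 \<le> (X - l') * (h' - X)" using X by auto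
  ultimately have "(X - l) * (h - X) = 0" "(X - l') * (h' - X) = 0" by linarith+
  then show ?thesis by auto
next
  case True
  then have AB: "(X - l) * (h - X) = (X - l') * (h' - X)" using eq s by auto
  consider "h \<le> l' \<or> h' \<le> l" | "l \<le> l'" "h' \<le> h" | "l' \<le> l" "h \<le> h'"
    using nc[OF True] by linarith
  then show ?thesis
  proof cases
    case 2
    then show ?thesis using nested_arches_meet[of l h l' h' X] lh X AB ne by auto
  next
    case 3
    then show ?thesis using nested_arches_meet[of l' h' l h X] lh X AB ne by auto
  qed (use X in auto)
qed

text \<open>Vertices lie on the real axis; pg e selects the side of the axis on which the edge e is drawn.\<close>

definition book_arc :: "('a \<Rightarrow> real) \<Rightarrow> ('a set \<Rightarrow> bool) \<Rightarrow> 'a set \<Rightarrow> real \<Rightarrow> complex" where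
  "book_arc pos pg e = arch (Min (pos ` e)) (Max (pos ` e)) (if pg e then 1 else -1)"

lemma book_arc_edge: "pos x < pos y \<Longrightarrow> book_arc pos pg {x, y} = arch (pos x) (pos y) (if pg {x, y} then 1 else -1)"
  unfolding book_arc_def by simp

lemma graph_edge_ordered:
  fixes pos :: "'a \<Rightarrow> real"
  assumes "graph V E" "inj_on pos V" "e \<in> E"
  obtains x y where "e = {x, y}" "x \<in> V" "y \<in> V" "pos x < pos y"
proof -
  from assms obtain a b where ab: "a \<noteq> b" "a \<in> V" "b \<in> V" "e = {a, b}" unfolding graph_def by meson
  then have "pos a \<noteq> pos b" using assms(2) by (meson inj_onD)
  then show ?thesis
  proof (cases "pos a < pos b")
    case False
    with \<open>pos a \<noteq> pos b\<close> have "pos b < pos a" by linarith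
    with ab show ?thesis using that[of b a] by (simp add: insert_commute)
  qed (use that ab in auto)
qed

lemma book_arc_drawing:
  assumes "x \<in> V" "y \<in> V" "pos x < pos y" "inj_on pos V"
  shows "arc (book_arc pos pg {x, y}) \<and> pathstart (book_arc pos pg {x, y}) = of_real (pos x)
    \<and> pathfinish (book_arc pos pg {x, y}) = of_real (pos y)
    \<and> path_image (book_arc pos pg {x, y}) \<inter> (\<lambda>v. of_real (pos v)) ` V = (\<lambda>v. of_real (pos v)) ` {x, y}"
proof -
  define s :: real where "s = (if pg {x, y} then 1 else -1)"
  have g: "book_arc pos pg {x, y} = arch (pos x) (pos y) s"
    unfolding s_def using book_arc_edge[of pos x y pg, OF assms(3)] .
  have on_axis: "z = of_real (pos x) \<or> z = of_real (pos y)"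
    if "z \<in> path_image (arch (pos x) (pos y) s)" "Im z = 0" for z
  proof -
    from that obtain t where t: "t \<in> {0..1}" "z = arch (pos x) (pos y) s t"
      unfolding path_image_def by auto
    with that(2) have "s * (t * (pos y - pos x)) * ((1 - t) * (pos y - pos x)) = 0" by simp
    then have "t = 0 \<or> t = 1" using assms(3) by (auto simp: s_def split: if_splits)
    with t show ?thesis by auto
  qed
  have "of_real (pos x) \<in> path_image (arch (pos x) (pos y) s)"
    "of_real (pos y) \<in> path_image (arch (pos x) (pos y) s)"
    unfolding path_image_def by (force intro: image_eqI[of _ _ 0], force intro: image_eqI[of _ _ 1])
  moreover have "v \<in> {x, y}"
    if "v \<in> V" "of_real (pos v) \<in> path_image (arch (pos x) (pos y) s)" for v
    using on_axis[OF that(2)] that(1) assms(1,2,4) by (auto dest: inj_onD)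
  ultimately have "path_image (arch (pos x) (pos y) s) \<inter> (\<lambda>v. of_real (pos v)) ` V = (\<lambda>v. of_real (pos v)) ` {x, y}"
    using assms(1,2) by auto
  then show ?thesis
    unfolding g using arc_arch[OF assms(3)] by (simp add: pathstart_def pathfinish_def)
qed

lemma book_arcs_meet:
  assumes "x \<in> V" "y \<in> V" "pos x < pos y" "x' \<in> V" "y' \<in> V" "pos x' < pos y'" "inj_on pos V"
    and ne: "{x, y} \<noteq> {x', y'}"
    and nc: "pg {x, y} = pg {x', y'} \<Longrightarrow> \<not> crosses pos {x, y} {x', y'} \<and> \<not> crosses pos {x', y'} {x, y}"
  shows "path_image (book_arc pos pg {x, y}) \<inter> path_image (book_arc pos pg {x', y'})
    \<subseteq> (\<lambda>v. of_real (pos v)) ` ({x, y} \<inter> {x', y'})"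
proof
  fix z assume z: "z \<in> path_image (book_arc pos pg {x, y}) \<inter> path_image (book_arc pos pg {x', y'})"
  define s :: real where "s = (if pg {x, y} then 1 else -1)"
  define s' :: real where "s' = (if pg {x', y'} then 1 else -1)"
  have p1: "pos x \<le> Re z \<and> Re z \<le> pos y \<and> Im z = s * ((Re z - pos x) * (pos y - Re z))"
    using path_image_arch[OF assms(3)] z unfolding book_arc_edge[of pos x y pg, OF assms(3)] s_def by blast
  have p2: "pos x' \<le> Re z \<and> Re z \<le> pos y' \<and> Im z = s' * ((Re z - pos x') * (pos y' - Re z))"
    using path_image_arch[OF assms(6)] z unfolding book_arc_edge[of pos x' y' pg, OF assms(6)] s'_def by blast
  have "s = s' \<Longrightarrow> pg {x, y} = pg {x', y'}" unfolding s_def s'_def by (auto split: if_splits)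
  with nc have ncr: "s = s' \<Longrightarrow> \<not> crosses pos {x, y} {x', y'} \<and> \<not> crosses pos {x', y'} {x, y}" by blast
  have res: "(Re z = pos x \<or> Re z = pos y) \<and> (Re z = pos x' \<or> Re z = pos y')"
  proof (rule arches_meet[OF assms(3,6)])
    show "pos x \<le> Re z" "Re z \<le> pos y" "pos x' \<le> Re z" "Re z \<le> pos y'" using p1 p2 by auto
    show "s = 1 \<or> s = -1" "s' = 1 \<or> s' = -1" unfolding s_def s'_def by auto
    show "s * ((Re z - pos x) * (pos y - Re z)) = s' * ((Re z - pos x') * (pos y' - Re z))"
      using p1 p2 by simp
    show "\<not> (pos x < pos x' \<and> pos x' < pos y \<and> pos y < pos y')" if "s = s'"
      using ncr[OF that] unfolding crosses_def by blast
    show "\<not> (pos x' < pos x \<and> pos x < pos y' \<and> pos y' < pos y)" if "s = s'"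
      using ncr[OF that] unfolding crosses_def by blast
    show "(pos x, pos y) \<noteq> (pos x', pos y')"
      using ne assms(1,2,4,5,7) by (auto dest: inj_onD)
  qed
  then have "Im z = 0" using p1 by auto
  obtain w where w: "w \<in> {x, y}" "Re z = pos w" using res by auto
  obtain w' where w': "w' \<in> {x', y'}" "Re z = pos w'" using res by auto
  have "w = w'" using w w' assms(1,2,4,5,7) by (auto dest: inj_onD)
  moreover have "z = of_real (pos w)" using w \<open>Im z = 0\<close> by (simp add: complex_eq_iff)
  ultimately show "z \<in> (\<lambda>v. of_real (pos v)) ` ({x, y} \<inter> {x', y'})" using w w' by blast
qed

lemma book_embedding_planar:
  fixes pos :: "'a \<Rightarrow> real" and pg :: "'a set \<Rightarrow> bool"
  assumes G: "graph V E" and inj: "inj_on pos V"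
    and nc: "\<And>e e'. e \<in> E \<Longrightarrow> e' \<in> E \<Longrightarrow> e \<noteq> e' \<Longrightarrow> pg e = pg e' \<Longrightarrow> \<not> crosses pos e e'"
  shows "planar V E"
proof -
  have "inj_on (\<lambda>v. complex_of_real (pos v)) V" using inj unfolding inj_on_def by simp
  moreover have "arc (book_arc pos pg e) \<and>
      (\<exists>x y. e = {x, y} \<and> pathstart (book_arc pos pg e) = of_real (pos x)
        \<and> pathfinish (book_arc pos pg e) = of_real (pos y)) \<and>
      path_image (book_arc pos pg e) \<inter> (\<lambda>v. of_real (pos v)) ` V = (\<lambda>v. of_real (pos v)) ` e"
    if "e \<in> E" for e
    using graph_edge_ordered[OF G inj that] book_arc_drawing[OF _ _ _ inj] by metis
  moreover have "path_image (book_arc pos pg e) \<inter> path_image (book_arc pos pg e')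
      \<subseteq> (\<lambda>v. of_real (pos v)) ` (e \<inter> e')"
    if "e \<in> E" "e' \<in> E" "e \<noteq> e'" for e e'
  proof -
    obtain x y where xy: "e = {x, y}" "x \<in> V" "y \<in> V" "pos x < pos y"
      using graph_edge_ordered[OF G inj \<open>e \<in> E\<close>] .
    obtain x' y' where xy': "e' = {x', y'}" "x' \<in> V" "y' \<in> V" "pos x' < pos y'"
      using graph_edge_ordered[OF G inj \<open>e' \<in> E\<close>] .
    show ?thesis
      unfolding xy(1) xy'(1)
      by (rule book_arcs_meet[OF xy(2-4) xy'(2-4) inj]) (use that nc xy xy' in auto)
  qed
  ultimately show ?thesis
    unfolding planar_def planar_drawing_def by blast
qed

section \<open>The lower-bound graph\<close>

lemma mult_add_less_iff_lex: "w1 < (m::nat) \<Longrightarrow> w2 < m \<Longrightarrow> (g1 * m + w1 < g2 * m + w2) \<longleftrightarrow> (g1 < g2 \<or> g1 = g2 \<and> w1 < w2)"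
proof
  assume w: "w1 < m" "w2 < m" and l: "g1 * m + w1 < g2 * m + w2"
  show "g1 < g2 \<or> g1 = g2 \<and> w1 < w2"
  proof (rule ccontr)
    assume "\<not> (g1 < g2 \<or> g1 = g2 \<and> w1 < w2)"
    then have "g2 < g1 \<or> g1 = g2 \<and> w2 \<le> w1" by auto
    then show False
    proof
      assume "g2 < g1"
      then have "Suc g2 \<le> g1" by simp
      then have "Suc g2 * m \<le> g1 * m" by (rule mult_le_mono1)
      then show False using l w by simp
    qed (use l in simp)
  qed
next
  assume w: "w1 < m" "w2 < m" and h: "g1 < g2 \<or> g1 = g2 \<and> w1 < w2"
  show "g1 * m + w1 < g2 * m + w2"
  using h proof
    assume "g1 < g2"
    then have "Suc g1 \<le> g2" by simp
    then have "Suc g1 * m \<le> g2 * m" by (rule mult_le_mono1)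
    then show ?thesis using w by simp
  qed simp
qed

lemma mult_add_eq_iff_lex: "w1 < (m::nat) \<Longrightarrow> w2 < m \<Longrightarrow> (g1 * m + w1 = g2 * m + w2) \<longleftrightarrow> (g1 = g2 \<and> w1 = w2)"
proof -
  assume w: "w1 < m" "w2 < m"
  show ?thesis
  proof
    assume eq: "g1 * m + w1 = g2 * m + w2"
    then have "\<not> (g1 * m + w1 < g2 * m + w2)" "\<not> (g2 * m + w2 < g1 * m + w1)" by simp_all
    then show "g1 = g2 \<and> w1 = w2" using mult_add_less_iff_lex[OF w] mult_add_less_iff_lex[OF w(2) w(1)] by auto
  qed simp
qed

text \<open>Vertices: the cycle Cyc 0, ..., Cyc (3d - 1), the hubs Hub True and Hub False, the inner vertices
  Spoke \<sigma> j t (0 < t < d) of the spoke from Hub \<sigma> to Cyc j, and the tail Tail 0, ..., Tail (P - 1)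
  hanging from Hub True.  They are encoded into nat by to_nat, since the theorem asks for a
  graph on nat.\<close>

datatype dw_vertex = Cyc nat | Spoke bool nat nat | Hub bool | Tail nat
instance dw_vertex :: countable by countable_datatype

locale double_wheel =
  fixes d P :: nat
  assumes d_ge_1: "1 \<le> d"
begin

abbreviation "N \<equiv> 3 * d"

definition cycle_pt :: "nat \<Rightarrow> dw_vertex" where
  "cycle_pt j = Cyc (j mod N)"

definition spoke_pt :: "bool \<Rightarrow> nat \<Rightarrow> nat \<Rightarrow> dw_vertex" where
  "spoke_pt \<sigma> j t = (if t = 0 then Hub \<sigma> else if t = d then Cyc j else Spoke \<sigma> j t)"

definition tail_pt :: "nat \<Rightarrow> dw_vertex" where
  "tail_pt k = (if k = 0 then Hub True else Tail (k - 1))"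

definition VA :: "dw_vertex set" where
  "VA = Cyc ` {..<N} \<union> (\<lambda>(\<sigma>, j, t). Spoke \<sigma> j t) ` (UNIV \<times> {..<N} \<times> {1..<d}) \<union> range Hub \<union> Tail ` {..<P}"

definition short_arc :: "(dw_vertex \<times> dw_vertex) set" where
  "short_arc = {(cycle_pt j, cycle_pt (Suc j)) | j. j < d}"

definition long_arc :: "(dw_vertex \<times> dw_vertex) set" where
  "long_arc = {(cycle_pt j, cycle_pt (Suc j)) | j. d \<le> j \<and> j < N}"

definition spokes :: "bool \<Rightarrow> (dw_vertex \<times> dw_vertex) set" where
  "spokes \<sigma> = {(spoke_pt \<sigma> j t, spoke_pt \<sigma> j (Suc t)) | j t. j < N \<and> t < d}"

definition tail_edges :: "(dw_vertex \<times> dw_vertex) set" where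
  "tail_edges = {(tail_pt (Suc i), tail_pt i) | i. i < P}"

definition EA :: "(dw_vertex \<times> dw_vertex) set" where
  "EA = short_arc \<union> long_arc \<union> spokes True \<union> spokes False \<union> tail_edges"

definition enc_edge :: "dw_vertex \<times> dw_vertex \<Rightarrow> nat set" where
  "enc_edge p = {to_nat (fst p), to_nat (snd p)}"

definition V :: "nat set" where
  "V = to_nat ` VA"

definition E :: "nat set set" where
  "E = enc_edge ` EA"

definition intact :: "(dw_vertex \<times> dw_vertex) set \<Rightarrow> nat set set \<Rightarrow> bool" where
  "intact X F \<longleftrightarrow> enc_edge ` X \<subseteq> E - F"

abbreviation "u0 \<equiv> to_nat (Cyc 0)"
abbreviation "v0 \<equiv> to_nat (Cyc d)"

lemma N_ge_3: "N \<ge> 3"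
  using d_ge_1 by simp

lemma cycle_pt_in_VA: "cycle_pt j \<in> VA"
  unfolding cycle_pt_def VA_def using N_ge_3 by auto

lemma spoke_pt_in_VA: "j < N \<Longrightarrow> t \<le> d \<Longrightarrow> spoke_pt \<sigma> j t \<in> VA"
  unfolding spoke_pt_def VA_def by (auto simp: image_iff)

lemma tail_pt_in_VA: "k \<le> P \<Longrightarrow> tail_pt k \<in> VA"
  unfolding tail_pt_def VA_def by auto

lemma EA_cases:
  assumes "p \<in> EA"
  obtains (short_arc) j where "j < d" "p = (cycle_pt j, cycle_pt (Suc j))"
  | (long_arc) j where "d \<le> j" "j < N" "p = (cycle_pt j, cycle_pt (Suc j))"
  | (spoke) \<sigma> j t where "j < N" "t < d" "p = (spoke_pt \<sigma> j t, spoke_pt \<sigma> j (Suc t))"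
  | (tail) i where "i < P" "p = (tail_pt (Suc i), tail_pt i)"
  using assms unfolding EA_def short_arc_def long_arc_def spokes_def tail_edges_def by blast

lemma cycle_pt_Suc_neq: "cycle_pt j \<noteq> cycle_pt (Suc j)"
  unfolding cycle_pt_def using N_ge_3 by (auto simp: mod_Suc)

lemma spoke_pt_Suc_neq: "t < d \<Longrightarrow> spoke_pt \<sigma> j t \<noteq> spoke_pt \<sigma> j (Suc t)"
  unfolding spoke_pt_def by auto

lemma tail_pt_Suc_neq: "tail_pt (Suc i) \<noteq> tail_pt i"
  unfolding tail_pt_def by auto

lemma EA_endpoints: "p \<in> EA \<Longrightarrow> fst p \<in> VA \<and> snd p \<in> VA \<and> fst p \<noteq> snd p"
  by (erule EA_cases) (auto simp: cycle_pt_in_VA spoke_pt_in_VA tail_pt_in_VA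
      cycle_pt_Suc_neq spoke_pt_Suc_neq tail_pt_Suc_neq)

lemma VA_iff: "a \<in> VA \<longleftrightarrow> (case a of Cyc j \<Rightarrow> j < N | Spoke \<sigma> j t \<Rightarrow> j < N \<and> 1 \<le> t \<and> t < d
   | Hub \<sigma> \<Rightarrow> True | Tail i \<Rightarrow> i < P)"
proof (cases a)
  case (Spoke \<sigma> j t)
  have "Spoke \<sigma> j t \<in> VA \<longleftrightarrow> Spoke \<sigma> j t \<in> (\<lambda>(\<sigma>,j,t). Spoke \<sigma> j t) ` (UNIV \<times> {..<N} \<times> {1..<d})"
    unfolding VA_def by blast
  also have "\<dots> \<longleftrightarrow> j < N \<and> 1 \<le> t \<and> t < d" by force
  finally show ?thesis using Spoke by simp
qed (auto simp: VA_def)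

lemma finite_VA: "finite VA"
  unfolding VA_def by auto

lemma finite_V: "finite V"
  unfolding V_def using finite_VA by simp

lemma u0_in_V: "u0 \<in> V" and v0_in_V: "v0 \<in> V"
  unfolding V_def using N_ge_3 d_ge_1 by (simp_all add: VA_iff)

lemma graph_VE: "graph V E"
  unfolding graph_def
proof (intro conjI ballI finite_V)
  fix e assume "e \<in> E"
  then obtain p where p: "p \<in> EA" "e = enc_edge p" unfolding E_def by auto
  from EA_endpoints[OF p(1)] show "\<exists>x y. x \<noteq> y \<and> x \<in> V \<and> y \<in> V \<and> e = {x, y}"
    unfolding p(2) enc_edge_def V_def by (intro exI[of _ "to_nat (fst p)"] exI[of _ "to_nat (snd p)"]) auto
qed

lemma intact_adj:
  "intact X F \<Longrightarrow> (a, b) \<in> X \<Longrightarrow> adj (E - F) (to_nat a) (to_nat b) \<and> adj (E - F) (to_nat b) (to_nat a)"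
proof -
  assume "intact X F" "(a, b) \<in> X"
  then have "enc_edge (a, b) \<in> E - F" unfolding intact_def by blast
  then show ?thesis by (simp add: adj_def enc_edge_def insert_commute)
qed

lemma intact_empty:
  "intact short_arc {}" "intact long_arc {}" "intact (spokes \<sigma>) {}" "intact tail_edges {}"
  unfolding intact_def E_def EA_def by (cases \<sigma>; auto)+

lemma relpowp_cycle:
  assumes "intact X F" "\<And>k. a \<le> k \<Longrightarrow> k < b \<Longrightarrow> (cycle_pt k, cycle_pt (Suc k)) \<in> X" "a \<le> b"
  shows "(adj (E - F) ^^ (b - a)) (to_nat (cycle_pt a)) (to_nat (cycle_pt b))"
  using relpowp_chain[of a b "E - F" "\<lambda>k. to_nat (cycle_pt k)"] assms intact_adj by blast

lemma relpowp_long_arc: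
  "intact long_arc F \<Longrightarrow> d \<le> a \<Longrightarrow> a \<le> b \<Longrightarrow> b \<le> N \<Longrightarrow>
    (adj (E - F) ^^ (b - a)) (to_nat (cycle_pt a)) (to_nat (cycle_pt b))"
  by (rule relpowp_cycle) (auto simp: long_arc_def)

lemma relpowp_short_arc:
  "intact short_arc F \<Longrightarrow> a \<le> b \<Longrightarrow> b \<le> d \<Longrightarrow>
    (adj (E - F) ^^ (b - a)) (to_nat (cycle_pt a)) (to_nat (cycle_pt b))"
  by (rule relpowp_cycle) (auto simp: short_arc_def)

lemma relpowp_spoke:
  assumes "intact (spokes \<sigma>) F" "j < N" "a \<le> b" "b \<le> d"
  shows "(adj (E - F) ^^ (b - a)) (to_nat (spoke_pt \<sigma> j a)) (to_nat (spoke_pt \<sigma> j b))"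
proof (rule relpowp_chain[OF _ assms(3)])
  fix k assume "a \<le> k" "k < b"
  then have "k < d" using assms(4) by simp
  then have "(spoke_pt \<sigma> j k, spoke_pt \<sigma> j (Suc k)) \<in> spokes \<sigma>"
    using assms(2) unfolding spokes_def by blast
  then show "adj (E - F) (to_nat (spoke_pt \<sigma> j k)) (to_nat (spoke_pt \<sigma> j (Suc k)))"
    using intact_adj[OF assms(1)] by blast
qed

lemma relpowp_hub_cycle:
  assumes "intact (spokes \<sigma>) F"
  shows "(adj (E - F) ^^ d) (to_nat (Hub \<sigma>)) (to_nat (cycle_pt j))"
proof -
  have "j mod N < N" using N_ge_3 by simp
  from relpowp_spoke[OF assms this, of 0 d] show ?thesis
    using d_ge_1 by (simp add: spoke_pt_def cycle_pt_def)
qed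

lemma relpowp_tail:
  assumes "intact tail_edges F" "k \<le> P"
  shows "(adj (E - F) ^^ k) (to_nat (tail_pt 0)) (to_nat (tail_pt k))"
proof -
  have "(adj (E - F) ^^ (k - 0)) (to_nat (tail_pt 0)) (to_nat (tail_pt k))"
  proof (rule relpowp_chain)
    fix i assume "0 \<le> i" "i < k"
    then have "(tail_pt (Suc i), tail_pt i) \<in> tail_edges" using assms unfolding tail_edges_def by auto
    then show "adj (E - F) (to_nat (tail_pt i)) (to_nat (tail_pt (Suc i)))"
      using intact_adj[OF assms(1)] by blast
  qed simp
  then show ?thesis by simp
qed

lemma gconn_u0_hub: "intact (spokes \<sigma>) F \<Longrightarrow> gconn (E - F) u0 (to_nat (Hub \<sigma>))"
  using relpowp_hub_cycle[of \<sigma> F 0] by (simp add: cycle_pt_def gconn_sym relpowp_imp_gconn)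

lemma gconn_u0_vertex:
  assumes "x \<in> V"
  shows "gconn E u0 x"
proof -
  have conn: "gconn (E - {}) u0 (to_nat (Hub \<sigma>))" for \<sigma> by (rule gconn_u0_hub[OF intact_empty(3)])
  from assms obtain a where a: "a \<in> VA" "x = to_nat a" unfolding V_def by auto
  then consider j where "j < N" "a = cycle_pt j" | \<sigma> j t where "j < N" "t \<le> d" "a = spoke_pt \<sigma> j t"
    | k where "k \<le> P" "a = tail_pt k"
  proof (cases a)
    case (Cyc j)
    then show ?thesis using that(1)[of j] a by (simp add: VA_iff cycle_pt_def)
  next
    case (Spoke \<sigma> j t)
    then show ?thesis using that(2)[of j t \<sigma>] a by (simp add: VA_iff spoke_pt_def)
  next
    case (Hub \<sigma>)
    then show ?thesis using that(2)[of 0 0 \<sigma>] N_ge_3 by (simp add: spoke_pt_def)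
  next
    case (Tail i)
    then show ?thesis using that(3)[of "Suc i"] a by (simp add: VA_iff tail_pt_def)
  qed
  then show ?thesis
  proof cases
    case 1
    from relpowp_hub_cycle[OF intact_empty(3), of True j] have "gconn (E - {}) (to_nat (Hub True)) x"
      using 1 a by (simp add: relpowp_imp_gconn)
    with conn show ?thesis by (auto intro: gconn_trans)
  next
    case (2 \<sigma> j t)
    from relpowp_spoke[OF intact_empty(3) 2(1), of 0 t] have "(adj (E - {}) ^^ t) (to_nat (Hub \<sigma>)) x"
      using 2 a by (simp add: spoke_pt_def[of _ _ 0])
    then have "gconn (E - {}) (to_nat (Hub \<sigma>)) x" by (rule relpowp_imp_gconn)
    with conn show ?thesis by (auto intro: gconn_trans)
  next
    case 3
    from relpowp_tail[OF intact_empty(4) 3(1)] have "gconn (E - {}) (to_nat (Hub True)) x"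
      using 3 a by (simp add: tail_pt_def[of 0] relpowp_imp_gconn)
    with conn show ?thesis by (auto intro: gconn_trans)
  qed
qed

lemma connected_VE: "connected_graph V E"
  unfolding connected_graph_def using u0_in_V gconn_u0_vertex by (blast intro: gconn_trans gconn_sym)

lemma card_VA: "card VA = N + 2 * (N * (d - 1)) + 2 + P"
proof -
  define A1 where "A1 = Cyc ` {..<N}"
  define A2 where "A2 = (\<lambda>(\<sigma>,j,t). Spoke \<sigma> j t) ` (UNIV \<times> {..<N} \<times> {1..<d})"
  define A3 where "A3 = range Hub"
  define A4 where "A4 = Tail ` {..<P}"
  have VA: "VA = ((A1 \<union> A2) \<union> A3) \<union> A4" unfolding VA_def A1_def A2_def A3_def A4_def by blast
  have c1: "card A1 = N" unfolding A1_def by (simp add: card_image inj_on_def)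
  have "inj_on (\<lambda>(\<sigma>,j,t). Spoke \<sigma> j t) (UNIV \<times> {..<N} \<times> {1..<d})" by (auto simp: inj_on_def)
  then have c2: "card A2 = 2 * (N * (d - 1))" unfolding A2_def by (simp add: card_image card_cartesian_product)
  have "range Hub = {Hub True, Hub False}" by (auto intro: range_eqI[of _ _ True] range_eqI[of _ _ False] simp: image_iff)
  then have c3: "card A3 = 2" unfolding A3_def by simp
  have c4: "card A4 = P" unfolding A4_def by (simp add: card_image inj_on_def)
  have f: "finite A1" "finite A2" "finite A3" "finite A4" unfolding A1_def A2_def A3_def A4_def by auto
  have "card VA = card (A1 \<union> A2 \<union> A3) + card A4"
    unfolding VA by (rule card_Un_disjoint) (use f in \<open>auto simp: A1_def A2_def A3_def A4_def\<close>)
  also have "card (A1 \<union> A2 \<union> A3) = card (A1 \<union> A2) + card A3"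
    by (rule card_Un_disjoint) (use f in \<open>auto simp: A1_def A2_def A3_def\<close>)
  also have "card (A1 \<union> A2) = card A1 + card A2"
    by (rule card_Un_disjoint) (use f in \<open>auto simp: A1_def A2_def\<close>)
  finally show ?thesis using c1 c2 c3 c4 by simp
qed

lemma card_V: "card V = N + 2 * (N * (d - 1)) + 2 + P"
  unfolding V_def using card_VA by (simp add: card_image)

text \<open>Lower bounds on distances come from potentials: hub_pot \<sigma> agrees with the distance from Hub \<sigma>
  on the cycle and on the spokes of Hub \<sigma>, and cycle_pot p extends a potential p on the cycle into
  the spokes.\<close>

lemma unit_lipschitz_onI:
  assumes "\<And>p. p \<in> EA \<Longrightarrow> \<phi> (snd p) \<le> \<phi> (fst p) + 1 \<and> \<phi> (fst p) \<le> \<phi> (snd p) + 1"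
  shows "unit_lipschitz E (\<lambda>n. \<phi> (from_nat n))"
  unfolding unit_lipschitz_def
proof (intro allI impI)
  fix a b assume "{a, b} \<in> E"
  then obtain p where p: "p \<in> EA" "{a, b} = enc_edge p" unfolding E_def by auto
  then have "a = to_nat (fst p) \<and> b = to_nat (snd p) \<or> a = to_nat (snd p) \<and> b = to_nat (fst p)"
    unfolding enc_edge_def by (simp add: doubleton_eq_iff)
  then show "\<phi> (from_nat b) \<le> \<phi> (from_nat a) + 1" using assms[OF p(1)] by auto
qed

definition hub_pot :: "bool \<Rightarrow> dw_vertex \<Rightarrow> int" where
  "hub_pot \<sigma> x = (case x of Cyc j \<Rightarrow> int d | Spoke \<tau> j t \<Rightarrow> (if \<tau> = \<sigma> then int t else int d)
     | Hub \<tau> \<Rightarrow> (if \<tau> = \<sigma> then 0 else int d) | Tail i \<Rightarrow> (if \<sigma> then 0 else int d))"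

lemma hub_pot_spoke_pt: "t \<le> d \<Longrightarrow> hub_pot \<sigma>' (spoke_pt \<sigma> j t) = (if \<sigma> = \<sigma>' then int t else int d)"
  unfolding hub_pot_def spoke_pt_def by auto

lemma hub_pot_cycle_pt: "hub_pot \<sigma> (cycle_pt j) = int d"
  unfolding hub_pot_def cycle_pt_def by simp

lemma hub_pot_Hub: "hub_pot \<sigma> (Hub \<sigma>) = 0"
  unfolding hub_pot_def by simp

lemma unit_lipschitz_hub_pot: "unit_lipschitz E (\<lambda>n. hub_pot \<sigma> (from_nat n))"
proof (rule unit_lipschitz_onI)
  fix p assume "p \<in> EA"
  then show "hub_pot \<sigma> (snd p) \<le> hub_pot \<sigma> (fst p) + 1 \<and> hub_pot \<sigma> (fst p) \<le> hub_pot \<sigma> (snd p) + 1"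
  proof (cases rule: EA_cases)
    case (spoke \<tau> j t) then show ?thesis by (simp add: hub_pot_spoke_pt)
  next
    case (tail i) then show ?thesis by (simp add: hub_pot_def tail_pt_def)
  qed (simp_all add: hub_pot_cycle_pt)
qed

definition cycle_pot :: "(nat \<Rightarrow> int) \<Rightarrow> dw_vertex \<Rightarrow> int" where
  "cycle_pot p x = (case x of Cyc j \<Rightarrow> p j | Spoke \<tau> j t \<Rightarrow> max (p j) (int d - int t)
     | Hub \<tau> \<Rightarrow> int d | Tail i \<Rightarrow> int d)"

lemma cycle_pot_spoke_pt: "0 \<le> p j \<Longrightarrow> p j \<le> int d \<Longrightarrow> t \<le> d \<Longrightarrow> cycle_pot p (spoke_pt \<sigma> j t) = max (p j) (int d - int t)"
  unfolding cycle_pot_def spoke_pt_def by auto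

lemma unit_lipschitz_cycle_pot:
  assumes rng: "\<And>j. j < N \<Longrightarrow> 0 \<le> p j \<and> p j \<le> int d"
    and stp: "\<And>j. j < N \<Longrightarrow> p (Suc j mod N) \<le> p j + 1 \<and> p j \<le> p (Suc j mod N) + 1"
  shows "unit_lipschitz E (\<lambda>n. cycle_pot p (from_nat n))"
proof (rule unit_lipschitz_onI)
  have cyc: "cycle_pot p (cycle_pt (Suc j)) \<le> cycle_pot p (cycle_pt j) + 1 \<and> cycle_pot p (cycle_pt j) \<le> cycle_pot p (cycle_pt (Suc j)) + 1" for j
  proof -
    have "j mod N < N" using N_ge_3 by simp
    from stp[OF this] have "p (Suc (j mod N) mod N) \<le> p (j mod N) + 1 \<and> p (j mod N) \<le> p (Suc (j mod N) mod N) + 1" .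
    moreover have "Suc (j mod N) mod N = Suc j mod N" by (simp add: mod_Suc_eq)
    ultimately show ?thesis unfolding cycle_pot_def cycle_pt_def by simp
  qed
  fix q assume "q \<in> EA"
  then show "cycle_pot p (snd q) \<le> cycle_pot p (fst q) + 1 \<and> cycle_pot p (fst q) \<le> cycle_pot p (snd q) + 1"
  proof (cases rule: EA_cases)
    case (spoke \<tau> j t)
    then show ?thesis using rng[of j] by (auto simp: cycle_pot_spoke_pt max_def)
  next
    case (tail i) then show ?thesis by (simp add: cycle_pot_def tail_pt_def)
  qed (simp_all add: cyc)
qed

definition pot_u :: "nat \<Rightarrow> int" where
  "pot_u j = (if j \<le> d then int j else max 0 (2 * int d - int j))"

definition pot_antipode :: "nat \<Rightarrow> int" where
  "pot_antipode j = (if d \<le> j then \<bar>int j - 2 * int d\<bar> else int d)"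

lemma unit_lipschitz_pot_u: "unit_lipschitz E (\<lambda>n. cycle_pot pot_u (from_nat n))"
  by (rule unit_lipschitz_cycle_pot) (use d_ge_1 in \<open>auto simp: pot_u_def mod_Suc\<close>)

lemma unit_lipschitz_pot_antipode: "unit_lipschitz E (\<lambda>n. cycle_pot pot_antipode (from_nat n))"
  by (rule unit_lipschitz_cycle_pot) (use d_ge_1 in \<open>auto simp: pot_antipode_def mod_Suc\<close>)

lemma gdist_u0_v0: "gdist E u0 v0 = d"
proof -
  have "(adj (E - {}) ^^ (d - 0)) (to_nat (cycle_pt 0)) (to_nat (cycle_pt d))"
    by (rule relpowp_short_arc[OF intact_empty(1)]) simp_all
  then have path: "(adj (E - {}) ^^ d) u0 v0" using d_ge_1 by (simp add: cycle_pt_def)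
  have "gconn (E - {}) u0 v0 \<and> d \<le> gdist (E - {}) u0 v0 \<and> gdist (E - {}) u0 v0 \<le> d"
    by (rule gdist_between[OF path le_refl unit_lipschitz_pot_u]) (simp add: cycle_pot_def pot_u_def)
  then show ?thesis by simp
qed

definition root_u :: "nat set set \<Rightarrow> nat" where
  "root_u F = (if intact short_arc F \<and> intact long_arc F \<and> intact (spokes True) F then to_nat (Hub True)
     else if intact short_arc F \<and> intact long_arc F \<and> intact (spokes False) F then to_nat (Hub False)
     else if intact long_arc F then to_nat (cycle_pt (2 * d)) else u0)"

definition root_rule :: "nat root_rule" where
  "root_rule i F C = (if u0 \<in> C then root_u F else (SOME x. x \<in> C))"

lemma gconn_u0_antipode: "intact long_arc F \<Longrightarrow> gconn (E - F) u0 (to_nat (cycle_pt (2 * d)))"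
  using relpowp_long_arc[of F "2 * d" N]
  by (simp add: cycle_pt_def gconn_sym relpowp_imp_gconn)

lemma gconn_u0_root_u: "gconn (E - F) u0 (root_u F)"
  unfolding root_u_def using gconn_u0_hub gconn_u0_antipode gconn_refl by auto

lemma root_u_in_V: "root_u F \<in> V"
  unfolding root_u_def V_def using cycle_pt_in_VA u0_in_V[unfolded V_def] by (auto simp: VA_iff)

lemma root_rule_component_u0: "root_rule i F (component_of V (E - F) u0) = root_u F"
  unfolding root_rule_def using self_in_component_of[OF u0_in_V] by simp

lemma valid_root_rule: "valid_root_rule V E root_rule"
  unfolding valid_root_rule_def
proof (intro allI impI)
  fix i F C assume C: "C \<in> components V (E - F)"
  show "root_rule i F C \<in> C"
  proof (cases "u0 \<in> C")
    case True
    then have "C = component_of V (E - F) u0" by (rule components_eq_component_of[OF C])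
    then show ?thesis
      unfolding root_rule_def using True root_u_in_V gconn_u0_root_u by (auto simp: component_of_def)
  next
    case False
    from C obtain x where "x \<in> V" "C = component_of V (E - F) x" unfolding components_eq_image by blast
    then have "x \<in> C" by (simp add: self_in_component_of)
    then show ?thesis unfolding root_rule_def using False by (auto intro: someI)
  qed
qed

lemma level_band_enc_edgeI:
  assumes "\<And>a b. (a, b) \<in> X \<Longrightarrow> a \<in> S \<and> b \<in> S"
    and "\<And>a. a \<in> S \<Longrightarrow> gconn (E - F) r (to_nat a) \<and> lo \<le> gdist (E - F) r (to_nat a) \<and> gdist (E - F) r (to_nat a) \<le> hi"
  shows "level_band (E - F) r (enc_edge ` X) lo hi"
  unfolding level_band_def enc_edge_def using assms by fastforce

lemma spokes_endpoints:
  "(a, b) \<in> spokes \<sigma> \<Longrightarrow> a \<in> {spoke_pt \<sigma> j t |j t. j < N \<and> t \<le> d} \<and> b \<in> {spoke_pt \<sigma> j t |j t. j < N \<and> t \<le> d}"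
  unfolding spokes_def by fastforce

lemma short_arc_endpoints: "(a, b) \<in> short_arc \<Longrightarrow> a \<in> cycle_pt ` {..d} \<and> b \<in> cycle_pt ` {..d}"
  unfolding short_arc_def by fastforce

lemma long_arc_endpoints: "(a, b) \<in> long_arc \<Longrightarrow> a \<in> cycle_pt ` {d..N} \<and> b \<in> cycle_pt ` {d..N}"
  unfolding long_arc_def by fastforce

lemma band_spokes_own_hub:
  assumes "intact (spokes \<sigma>) F"
  shows "level_band (E - F) (to_nat (Hub \<sigma>)) (enc_edge ` spokes \<sigma>) 0 d"
proof (rule level_band_enc_edgeI[OF spokes_endpoints])
  fix a assume "a \<in> {spoke_pt \<sigma> j t |j t. j < N \<and> t \<le> d}"
  then obtain j t where jt: "j < N" "t \<le> d" "a = spoke_pt \<sigma> j t" by blast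
  have "(adj (E - F) ^^ (t - 0)) (to_nat (spoke_pt \<sigma> j 0)) (to_nat (spoke_pt \<sigma> j t))"
    by (rule relpowp_spoke[OF assms jt(1)]) (use jt in auto)
  then have "(adj (E - F) ^^ t) (to_nat (Hub \<sigma>)) (to_nat a)" using jt by (simp add: spoke_pt_def[of _ _ 0])
  from gdist_at_most[OF this jt(2)] show "gconn (E - F) (to_nat (Hub \<sigma>)) (to_nat a) \<and>
      0 \<le> gdist (E - F) (to_nat (Hub \<sigma>)) (to_nat a) \<and> gdist (E - F) (to_nat (Hub \<sigma>)) (to_nat a) \<le> d"
    by simp
qed

lemma band_cycle_hub:
  assumes "intact (spokes \<sigma>) F" "X \<subseteq> short_arc \<union> long_arc"
  shows "level_band (E - F) (to_nat (Hub \<sigma>)) (enc_edge ` X) d d"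
proof (rule level_band_enc_edgeI[where S = "range cycle_pt"])
  show "(a, b) \<in> X \<Longrightarrow> a \<in> range cycle_pt \<and> b \<in> range cycle_pt" for a b
    using assms(2) unfolding short_arc_def long_arc_def by blast
  fix a assume "a \<in> range cycle_pt"
  then obtain j where "a = cycle_pt j" by blast
  then show "gconn (E - F) (to_nat (Hub \<sigma>)) (to_nat a) \<and>
      d \<le> gdist (E - F) (to_nat (Hub \<sigma>)) (to_nat a) \<and> gdist (E - F) (to_nat (Hub \<sigma>)) (to_nat a) \<le> d"
    using gdist_between[where lo = d, OF relpowp_hub_cycle[OF assms(1), of j] le_refl unit_lipschitz_hub_pot[of \<sigma>]]
    by (simp add: hub_pot_cycle_pt hub_pot_Hub)
qed

text \<open>From one hub, the spokes of the other hub are reached through the cycle.\<close>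

lemma band_spokes_other_hub:
  assumes own: "intact (spokes \<sigma>) F" and other: "intact (spokes (\<not> \<sigma>)) F"
  shows "level_band (E - F) (to_nat (Hub \<sigma>)) (enc_edge ` spokes (\<not> \<sigma>)) d (2 * d)"
proof (rule level_band_enc_edgeI[OF spokes_endpoints])
  fix a assume "a \<in> {spoke_pt (\<not> \<sigma>) j t |j t. j < N \<and> t \<le> d}"
  then obtain j t where jt: "j < N" "t \<le> d" "a = spoke_pt (\<not> \<sigma>) j t" by blast
  have "(adj (E - F) ^^ d) (to_nat (Hub \<sigma>)) (to_nat (Cyc j))"
    using relpowp_hub_cycle[OF own, of j] jt(1) by (simp add: cycle_pt_def)
  moreover have "(adj (E - F) ^^ (d - t)) (to_nat (Cyc j)) (to_nat a)"
    using adj_relpowp_sym[OF relpowp_spoke[OF other jt(1,2) le_refl]] jt d_ge_1 by (simp add: spoke_pt_def)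
  ultimately have "(adj (E - F) ^^ (d + (d - t))) (to_nat (Hub \<sigma>)) (to_nat a)"
    by (rule relpowp_trans)
  then show "gconn (E - F) (to_nat (Hub \<sigma>)) (to_nat a) \<and>
      d \<le> gdist (E - F) (to_nat (Hub \<sigma>)) (to_nat a) \<and> gdist (E - F) (to_nat (Hub \<sigma>)) (to_nat a) \<le> 2 * d"
    by (rule gdist_between[OF _ _ unit_lipschitz_hub_pot[of \<sigma>]])
      (use jt in \<open>simp_all add: hub_pot_spoke_pt hub_pot_Hub\<close>)
qed

lemma band_long_arc_antipode:
  assumes "intact long_arc F"
  shows "level_band (E - F) (to_nat (cycle_pt (2 * d))) (enc_edge ` long_arc) 0 d"
proof (rule level_band_enc_edgeI[OF long_arc_endpoints])
  fix a assume "a \<in> cycle_pt ` {d..N}"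
  then obtain j where j: "d \<le> j" "j \<le> N" "a = cycle_pt j" by auto
  consider "j \<le> 2 * d" | "2 * d \<le> j" by linarith
  then have "(adj (E - F) ^^ (if j \<le> 2 * d then 2 * d - j else j - 2 * d)) (to_nat (cycle_pt (2 * d))) (to_nat a)"
  proof cases
    case 1
    then show ?thesis
      using adj_relpowp_sym[OF relpowp_long_arc[OF assms j(1) 1]] j by simp
  next
    case 2
    then show ?thesis
      using relpowp_long_arc[OF assms _ 2 j(2)] j by auto
  qed
  moreover have "(if j \<le> 2 * d then 2 * d - j else j - 2 * d) \<le> d" using j by auto
  ultimately show "gconn (E - F) (to_nat (cycle_pt (2 * d))) (to_nat a) \<and>
      0 \<le> gdist (E - F) (to_nat (cycle_pt (2 * d))) (to_nat a) \<and> gdist (E - F) (to_nat (cycle_pt (2 * d))) (to_nat a) \<le> d"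
    using gdist_at_most by simp
qed

text \<open>From the antipode, the short arc is reached around either end of the long arc.\<close>

lemma band_short_arc_antipode:
  assumes short: "intact short_arc F" and long: "intact long_arc F"
  shows "level_band (E - F) (to_nat (cycle_pt (2 * d))) (enc_edge ` short_arc) d (d + d div 2)"
proof (rule level_band_enc_edgeI[OF short_arc_endpoints])
  fix a assume "a \<in> cycle_pt ` {..d}"
  then obtain j where j: "j \<le> d" "a = cycle_pt j" by auto
  have path: "(adj (E - F) ^^ (d + min j (d - j))) (to_nat (cycle_pt (2 * d))) (to_nat a)"
  proof (cases "j \<le> d - j")
    case True
    have "(adj (E - F) ^^ (N - 2 * d)) (to_nat (cycle_pt (2 * d))) (to_nat (cycle_pt 0))"
      using relpowp_long_arc[OF long, of "2 * d" N] by (simp add: cycle_pt_def)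
    moreover have "(adj (E - F) ^^ (j - 0)) (to_nat (cycle_pt 0)) (to_nat a)"
      using relpowp_short_arc[OF short, of 0 j] j by simp
    ultimately show ?thesis using True by (simp add: relpowp_trans)
  next
    case False
    have "(adj (E - F) ^^ (2 * d - d)) (to_nat (cycle_pt (2 * d))) (to_nat (cycle_pt d))"
      using adj_relpowp_sym[OF relpowp_long_arc[OF long, of d "2 * d"]] by simp
    moreover have "(adj (E - F) ^^ (d - j)) (to_nat (cycle_pt d)) (to_nat a)"
      using adj_relpowp_sym[OF relpowp_short_arc[OF short, of j d]] j by simp
    ultimately show ?thesis using False by (simp add: relpowp_trans)
  qed
  have len: "d + min j (d - j) \<le> d + d div 2" by linarith
  show "gconn (E - F) (to_nat (cycle_pt (2 * d))) (to_nat a) \<and>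
      d \<le> gdist (E - F) (to_nat (cycle_pt (2 * d))) (to_nat a) \<and>
      gdist (E - F) (to_nat (cycle_pt (2 * d))) (to_nat a) \<le> d + d div 2"
    by (rule gdist_between[OF path len unit_lipschitz_pot_antipode])
      (use j d_ge_1 in \<open>simp add: cycle_pt_def cycle_pot_def pot_antipode_def\<close>)
qed

lemma band_short_arc_u0:
  assumes "intact short_arc F"
  shows "level_band (E - F) u0 (enc_edge ` short_arc) 0 d"
proof (rule level_band_enc_edgeI[OF short_arc_endpoints])
  fix a assume "a \<in> cycle_pt ` {..d}"
  then obtain j where j: "j \<le> d" "a = cycle_pt j" by auto
  have "(adj (E - F) ^^ j) u0 (to_nat a)"
    using relpowp_short_arc[OF assms, of 0 j] j by (simp add: cycle_pt_def)
  from gdist_at_most[OF this j(1)]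
  show "gconn (E - F) u0 (to_nat a) \<and> 0 \<le> gdist (E - F) u0 (to_nat a) \<and> gdist (E - F) u0 (to_nat a) \<le> d"
    by simp
qed

text \<open>The layers are the short arc, the long arc and the two spoke systems; a spoke system only counts
  while the whole cycle is intact.  u and v stay connected while some layer is left.\<close>

definition layers :: "nat set set \<Rightarrow> nat" where
  "layers F = (if intact short_arc F \<and> intact long_arc F \<and> intact (spokes True) F \<and> intact (spokes False) F then 4
     else if intact short_arc F \<and> intact long_arc F \<and> (intact (spokes True) F \<or> intact (spokes False) F) then 3
     else if intact short_arc F \<and> intact long_arc F then 2
     else if intact short_arc F \<or> intact long_arc F then 1 else 0)"

lemma layers_eq_4_iff:
  "layers F = 4 \<longleftrightarrow> intact short_arc F \<and> intact long_arc F \<and> intact (spokes True) F \<and> intact (spokes False) F"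
  unfolding layers_def by auto

lemma layers_ge_3: "intact short_arc F \<Longrightarrow> intact long_arc F \<Longrightarrow> intact (spokes \<sigma>) F \<Longrightarrow> 3 \<le> layers F"
  unfolding layers_def by (cases \<sigma>) auto

lemma layers_ge_2: "intact short_arc F \<Longrightarrow> intact long_arc F \<Longrightarrow> 2 \<le> layers F"
  unfolding layers_def by auto

lemma layers_ge_1: "intact short_arc F \<or> intact long_arc F \<Longrightarrow> 1 \<le> layers F"
  unfolding layers_def by auto

lemma layers_le_4: "layers F \<le> 4"
  unfolding layers_def by auto

lemma layers_empty: "layers {} = 4"
  using intact_empty by (simp add: layers_eq_4_iff)

lemma gconn_u0_v0_if_layers:
  assumes "1 \<le> layers F"
  shows "gconn (E - F) u0 v0"
proof -
  from assms have "intact short_arc F \<or> intact long_arc F" unfolding layers_def by (auto split: if_splits)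
  then show ?thesis
  proof
    assume "intact short_arc F"
    from relpowp_short_arc[OF this, of 0 d] show ?thesis
      using d_ge_1 by (simp add: cycle_pt_def relpowp_imp_gconn)
  next
    assume "intact long_arc F"
    from relpowp_long_arc[OF this, of d N] show ?thesis
      using d_ge_1 by (simp add: cycle_pt_def relpowp_imp_gconn gconn_sym)
  qed
qed

context
  fixes R i :: nat and F :: "nat set set" and k :: "nat set \<Rightarrow> nat"
  assumes offsets: "\<forall>C\<in>components V (E - F). k C < R" and R: "2 * d < R"
begin

lemma intact_after_phase:
  assumes "intact X F" "level_band (E - F) (root_u F) (enc_edge ` X) lo hi" "hi \<le> R"
    and "\<not> (lo \<le> k (component_of V (E - F) u0) \<and> k (component_of V (E - F) u0) < hi)"
  shows "intact X (phase_cut V E R root_rule i F k)"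
proof -
  have XF: "enc_edge ` X \<subseteq> E - F" using assms(1) unfolding intact_def .
  have "enc_edge ` X \<inter> phase_cut V E R root_rule i F k = {}"
    by (rule phase_cut_spares_band[OF graph_VE u0_in_V XF offsets])
      (use assms gconn_u0_root_u in \<open>simp_all add: root_rule_component_u0\<close>)
  then show ?thesis using XF unfolding intact_def phase_cut_def by blast
qed

lemma layers_after_phase_4:
  assumes "layers F = 4"
  shows "3 \<le> layers (phase_cut V E R root_rule i F k) \<and>
    (2 * d \<le> k (component_of V (E - F) u0) \<longrightarrow> layers (phase_cut V E R root_rule i F k) = 4)"
proof -
  define F' where "F' = phase_cut V E R root_rule i F k"
  define k0 where "k0 = k (component_of V (E - F) u0)"
  have I: "intact short_arc F" "intact long_arc F" "intact (spokes True) F" "intact (spokes False) F"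
    using assms layers_eq_4_iff by auto
  have root: "root_u F = to_nat (Hub True)" unfolding root_u_def using I by simp
  have short: "intact short_arc F'"
    unfolding F'_def by (rule intact_after_phase[OF I(1) band_cycle_hub[OF I(3), folded root]]) (use R in auto)
  have long: "intact long_arc F'"
    unfolding F'_def by (rule intact_after_phase[OF I(2) band_cycle_hub[OF I(3), folded root]]) (use R in auto)
  have own: "intact (spokes True) F'" if "d \<le> k0"
    unfolding F'_def by (rule intact_after_phase[OF I(3) band_spokes_own_hub[OF I(3), folded root]])
      (use R that in \<open>auto simp: k0_def\<close>)
  have other: "intact (spokes False) F'" if "k0 < d \<or> 2 * d \<le> k0"
    unfolding F'_def by (rule intact_after_phase[OF I(4) band_spokes_other_hub[OF I(3), simplified, OF I(4), folded root]])
      (use R that in \<open>auto simp: k0_def\<close>)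
  have "3 \<le> layers F'"
  proof (cases "d \<le> k0")
    case True
    then show ?thesis using layers_ge_3[OF short long own] by simp
  next
    case False
    then show ?thesis using layers_ge_3[OF short long other] by simp
  qed
  moreover have "layers F' = 4" if "2 * d \<le> k0"
    using short long own other that by (simp add: layers_eq_4_iff)
  ultimately show ?thesis unfolding F'_def k0_def by blast
qed

lemma layers_after_phase_3:
  assumes "layers F = 3"
  shows "2 \<le> layers (phase_cut V E R root_rule i F k) \<and>
    (d \<le> k (component_of V (E - F) u0) \<longrightarrow> 3 \<le> layers (phase_cut V E R root_rule i F k))"
proof -
  define F' where "F' = phase_cut V E R root_rule i F k"
  have I: "intact short_arc F" "intact long_arc F" "intact (spokes True) F \<or> intact (spokes False) F"
    using assms unfolding layers_def by (auto split: if_splits)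
  obtain \<sigma> where \<sigma>: "intact (spokes \<sigma>) F" "root_u F = to_nat (Hub \<sigma>)"
  proof (cases "intact (spokes True) F")
    case True
    then show ?thesis using that[of True] I unfolding root_u_def by simp
  next
    case False
    then show ?thesis using that[of False] I unfolding root_u_def by simp
  qed
  have short: "intact short_arc F'"
    unfolding F'_def by (rule intact_after_phase[OF I(1) band_cycle_hub[OF \<sigma>(1), folded \<sigma>(2)]]) (use R in auto)
  have long: "intact long_arc F'"
    unfolding F'_def by (rule intact_after_phase[OF I(2) band_cycle_hub[OF \<sigma>(1), folded \<sigma>(2)]]) (use R in auto)
  have own: "intact (spokes \<sigma>) F'" if "d \<le> k (component_of V (E - F) u0)"
    unfolding F'_def by (rule intact_after_phase[OF \<sigma>(1) band_spokes_own_hub[OF \<sigma>(1), folded \<sigma>(2)]])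
      (use R that in auto)
  show ?thesis
    using layers_ge_2[OF short long] layers_ge_3[OF short long own] unfolding F'_def by blast
qed

lemma layers_after_phase_2:
  assumes "layers F = 2"
  shows "1 \<le> layers (phase_cut V E R root_rule i F k) \<and>
    (d + d div 2 \<le> k (component_of V (E - F) u0) \<longrightarrow> 2 \<le> layers (phase_cut V E R root_rule i F k))"
proof -
  define F' where "F' = phase_cut V E R root_rule i F k"
  define k0 where "k0 = k (component_of V (E - F) u0)"
  have I: "intact short_arc F" "intact long_arc F" "\<not> intact (spokes True) F" "\<not> intact (spokes False) F"
    using assms unfolding layers_def by (auto split: if_splits)
  have root: "root_u F = to_nat (cycle_pt (2 * d))" unfolding root_u_def using I by simp
  have long: "intact long_arc F'" if "d \<le> k0"
    unfolding F'_def by (rule intact_after_phase[OF I(2) band_long_arc_antipode[OF I(2), folded root]])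
      (use R that in \<open>auto simp: k0_def\<close>)
  have short: "intact short_arc F'" if "k0 < d \<or> d + d div 2 \<le> k0"
    unfolding F'_def by (rule intact_after_phase[OF I(1) band_short_arc_antipode[OF I(1,2), folded root]])
      (use R that in \<open>auto simp: k0_def\<close>)
  have "1 \<le> layers F'"
    using layers_ge_1[of F'] short long by (cases "d \<le> k0") auto
  moreover have "2 \<le> layers F'" if "d + d div 2 \<le> k0"
    using layers_ge_2 short long that by simp
  ultimately show ?thesis unfolding F'_def k0_def by blast
qed

lemma layers_after_phase_1:
  assumes "layers F = 1" "d \<le> k (component_of V (E - F) u0)"
  shows "1 \<le> layers (phase_cut V E R root_rule i F k)"
proof (cases "intact long_arc F")
  case True
  then have root: "root_u F = to_nat (cycle_pt (2 * d))"
    using assms(1) unfolding root_u_def layers_def by (auto split: if_splits)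
  have "intact long_arc (phase_cut V E R root_rule i F k)"
    by (rule intact_after_phase[OF True band_long_arc_antipode[OF True, folded root]]) (use R assms(2) in auto)
  then show ?thesis using layers_ge_1 by blast
next
  case False
  then have short: "intact short_arc F" and root: "root_u F = u0"
    using assms(1) unfolding root_u_def layers_def by (auto split: if_splits)
  have "intact short_arc (phase_cut V E R root_rule i F k)"
    by (rule intact_after_phase[OF short band_short_arc_u0[OF short, folded root]]) (use R assms(2) in auto)
  then show ?thesis using layers_ge_1 by blast
qed

end

text \<open>layer_risk j bounds the number of offsets of u's component for which a phase that starts with
  j layers loses one.\<close>

definition layer_risk :: "nat \<Rightarrow> nat" where
  "layer_risk j = (if j = 4 then 2 * d else if j = 3 then d else if j = 2 then d + d div 2 else d)"

lemma layers_after_phase: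
  assumes "\<forall>C\<in>components V (E - F). k C < R" "2 * d < R" "1 \<le> layers F"
  shows "layers F \<le> Suc (layers (phase_cut V E R root_rule i F k))
     \<and> (layer_risk (layers F) \<le> k (component_of V (E - F) u0) \<longrightarrow> layers F \<le> layers (phase_cut V E R root_rule i F k))"
proof -
  have "layers F = 4 \<or> layers F = 3 \<or> layers F = 2 \<or> layers F = 1" using assms(3) layers_le_4[of F] by linarith
  then show ?thesis
    using layers_after_phase_4[OF assms(1,2)] layers_after_phase_3[OF assms(1,2)]
      layers_after_phase_2[OF assms(1,2)] layers_after_phase_1[OF assms(1,2)]
    by (auto simp: layer_risk_def)
qed

lemma prob_no_layer_left:
  assumes R: "2 * d < R"
  shows "measure_pmf.prob (kpr_iter V E R root_rule 4) {F. layers F = 0}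
    \<le> real (layer_risk 1) / R * (real (layer_risk 2) / R) * (real (layer_risk 3) / R) * (real (layer_risk 4) / R)"
proof -
  define p where "p = (\<lambda>j. real (layer_risk j) / real R)"
  have fin: "finite (components V E')" for E' by (rule finite_components[OF finite_V])
  have "(\<forall>F\<in>set_pmf (kpr_iter V E R root_rule 4). 4 \<le> layers F + 4)
     \<and> measure_pmf.prob (kpr_iter V E R root_rule 4) {F. layers F + 4 \<le> 4} \<le> (\<Prod>j\<in>{4 - 4<..4}. p j)"
  proof (rule prob_level_drops[where start = "{}" and m = 4])
    fix i F F' assume l: "1 \<le> layers F" and F': "F' \<in> set_pmf (kpr_phase V E R root_rule i F)"
    from set_pmf_kpr_phase[OF fin _ F'] R obtain k where
      "\<forall>C\<in>components V (E - F). k C < R" "F' = phase_cut V E R root_rule i F k" by auto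
    with layers_after_phase[OF _ R l] show "layers F \<le> Suc (layers F')" by blast
  next
    fix i F assume l: "1 \<le> layers F"
    have "measure_pmf.prob (kpr_phase V E R root_rule i F) {F'. \<not> layers F \<le> layers F'}
        \<le> real (layer_risk (layers F)) / real R"
      by (rule prob_kpr_phase_fails[OF fin _ u0_in_V]) (use R layers_after_phase[OF _ R l] in auto)
    then show "measure_pmf.prob (kpr_phase V E R root_rule i F) {F'. layers F' < layers F} \<le> p (layers F)"
      unfolding p_def by (simp add: not_le)
  qed (simp_all add: layers_empty p_def)
  moreover have "{4 - 4<..4::nat} = {1, 2, 3, 4}" by auto
  ultimately show ?thesis by (simp add: p_def mult_ac)
qed

lemma layer_risk_product_le: "layer_risk 1 * layer_risk 2 * layer_risk 3 * layer_risk 4 \<le> 8 * d ^ 4"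
proof -
  have "layer_risk 1 * layer_risk 2 * layer_risk 3 * layer_risk 4 \<le> d * (2 * d) * d * (2 * d)"
    unfolding layer_risk_def by (intro mult_le_mono) auto
  also have "\<dots> = 4 * d ^ 4" by (simp add: power_def)
  finally show ?thesis by simp
qed

lemma kpr_sep_prob_le:
  assumes R: "2 * d < R"
  shows "kpr_sep_prob V E R root_rule u0 v0 \<le> 8 * (real d / real R) ^ 4"
proof -
  have "kpr_sep_prob V E R root_rule u0 v0 \<le> measure_pmf.prob (kpr_iter V E R root_rule 4) {F. layers F = 0}"
    unfolding kpr_sep_prob_def
    by (rule measure_pmf.finite_measure_mono) (use gconn_u0_v0_if_layers in force)+
  also have "\<dots> \<le> real (layer_risk 1 * layer_risk 2 * layer_risk 3 * layer_risk 4) / real R ^ 4"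
    using prob_no_layer_left[OF R] by (simp add: power_def field_simps)
  also have "\<dots> \<le> real (8 * d ^ 4) / real R ^ 4"
    using layer_risk_product_le[folded of_nat_le_iff[where 'a = real]] by (rule divide_right_mono) simp
  also have "\<dots> = 8 * (real d / real R) ^ 4"
    by (simp add: power_divide)
  finally show ?thesis .
qed

text \<open>The spine order, from left to right: the tail, Hub True, then for j = 1, ..., 3d - 1 the spoke
  from Hub True to Cyc j followed by Cyc j, then for j = 3d - 1, ..., 1 the spoke from Hub False to
  Cyc j read backwards, then Hub False, its spoke to Cyc 0, Cyc 0, and the spoke from Hub True to
  Cyc 0 read backwards.  The key (g, w) of a vertex stands for the position g * M + w.  Page A holds
  the first edges of the spokes of Hub True and of the spokes of Hub False to Cyc j, j \<noteq> 0, and the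
  edge from Cyc (3d - 1) to Cyc 0; page B holds the other cycle edges and the last edges of the
  spokes of Hub False to Cyc j, j \<noteq> 0 (for d = 1 these are also their first edges).  Every other
  edge joins neighbours on the spine.\<close>

abbreviation "M \<equiv> P + 2 * d + 1"

definition book_key :: "dw_vertex \<Rightarrow> nat \<times> nat" where
  "book_key x = (case x of Cyc j \<Rightarrow> (if j = 0 then (2 * N - 1, d) else (j, d))
    | Spoke \<sigma> j t \<Rightarrow> (if \<sigma> then (if j = 0 then (2 * N - 1, 2 * d - t) else (j, t))
                  else (if j = 0 then (2 * N - 1, t) else (2 * N - 1 - j, d - t)))
    | Hub \<sigma> \<Rightarrow> (if \<sigma> then (0, P) else (2 * N - 1, 0))
    | Tail i \<Rightarrow> (0, P - 1 - i))"

definition book_pos :: "dw_vertex \<Rightarrow> nat" where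
  "book_pos x = fst (book_key x) * M + snd (book_key x)"

lemma snd_book_key_less: "x \<in> VA \<Longrightarrow> snd (book_key x) < M"
  by (cases x) (auto simp: VA_iff book_key_def)

definition key_less :: "nat \<times> nat \<Rightarrow> nat \<times> nat \<Rightarrow> bool" where
  "key_less k k' \<longleftrightarrow> fst k < fst k' \<or> fst k = fst k' \<and> snd k < snd k'"

lemma book_pos_less_iff:
  "x \<in> VA \<Longrightarrow> y \<in> VA \<Longrightarrow> book_pos x < book_pos y \<longleftrightarrow> key_less (book_key x) (book_key y)"
  unfolding book_pos_def key_less_def by (rule mult_add_less_iff_lex[OF snd_book_key_less snd_book_key_less])

lemma inj_on_book_key: "inj_on book_key VA"
proof (rule inj_onI)
  fix x y assume "x \<in> VA" "y \<in> VA" "book_key x = book_key y"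
  then show "x = y"
    using d_ge_1 by (cases x; cases y) (auto simp: VA_iff book_key_def split: if_splits)
qed

lemma inj_on_book_pos: "inj_on book_pos VA"
proof (rule inj_onI)
  fix x y assume x: "x \<in> VA" and y: "y \<in> VA" and p: "book_pos x = book_pos y"
  then have "book_key x = book_key y"
    using mult_add_eq_iff_lex[OF snd_book_key_less[OF x] snd_book_key_less[OF y]]
    unfolding book_pos_def by (simp add: prod_eq_iff)
  then show "x = y" using inj_onD[OF inj_on_book_key _ x y] by blast
qed

definition page_A :: "dw_vertex set set" where
  "page_A = {{Hub True, spoke_pt True j 1} | j. 1 \<le> j \<and> j < N} \<union> {{Hub True, spoke_pt True 0 1}}
     \<union> {{spoke_pt False j 1, Hub False} | j. 1 \<le> j \<and> j < N \<and> 2 \<le> d} \<union> {{Cyc (N - 1), Cyc 0}}"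

definition page_B :: "dw_vertex set set" where
  "page_B = {{Cyc j, Cyc (Suc j)} | j. 1 \<le> j \<and> Suc j < N} \<union> {{Cyc 0, Cyc 1}}
     \<union> {{Cyc j, spoke_pt False j (d - 1)} | j. 1 \<le> j \<and> j < N}"

definition consecutive :: "dw_vertex \<times> dw_vertex \<Rightarrow> bool" where
  "consecutive p \<longleftrightarrow> book_pos (snd p) = Suc (book_pos (fst p)) \<or> book_pos (fst p) = Suc (book_pos (snd p))"

lemma consecutiveI1: "book_key b = (fst (book_key a), Suc (snd (book_key a))) \<Longrightarrow> consecutive (a, b)"
  by (simp add: consecutive_def book_pos_def)

lemma consecutiveI2: "book_key a = (fst (book_key b), Suc (snd (book_key b))) \<Longrightarrow> consecutive (a, b)"
  by (simp add: consecutive_def book_pos_def)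

lemma book_key_spoke_True: "j \<noteq> 0 \<Longrightarrow> 0 < t \<Longrightarrow> t \<le> d \<Longrightarrow> book_key (spoke_pt True j t) = (j, t)"
  unfolding spoke_pt_def book_key_def by auto

lemma book_key_spoke_True_0: "0 < t \<Longrightarrow> t \<le> d \<Longrightarrow> book_key (spoke_pt True 0 t) = (2 * N - 1, 2 * d - t)"
  unfolding spoke_pt_def book_key_def by auto

lemma book_key_spoke_False: "j \<noteq> 0 \<Longrightarrow> 0 < t \<Longrightarrow> t < d \<Longrightarrow> book_key (spoke_pt False j t) = (2 * N - 1 - j, d - t)"
  unfolding spoke_pt_def book_key_def by auto

lemma book_key_spoke_False_0: "t \<le> d \<Longrightarrow> book_key (spoke_pt False 0 t) = (2 * N - 1, t)"
  unfolding spoke_pt_def book_key_def by auto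

lemma book_key_tail_pt: "k \<le> P \<Longrightarrow> book_key (tail_pt k) = (0, P - k)"
  unfolding tail_pt_def book_key_def by auto

lemma cycle_edge_on_page: "j < N \<Longrightarrow> {cycle_pt j, cycle_pt (Suc j)} \<in> page_A \<union> page_B"
proof -
  assume j: "j < N"
  consider "j = 0" | "1 \<le> j" "Suc j < N" | "Suc j = N" using j by linarith
  then show ?thesis
  proof cases
    case 1
    then have "{cycle_pt j, cycle_pt (Suc j)} = {Cyc 0, Cyc 1}" using N_ge_3 by (simp add: cycle_pt_def)
    then show ?thesis unfolding page_B_def by blast
  next
    case 2
    then have "{cycle_pt j, cycle_pt (Suc j)} = {Cyc j, Cyc (Suc j)}" by (simp add: cycle_pt_def)
    then show ?thesis unfolding page_B_def using 2 by blast
  next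
    case 3
    then have "{cycle_pt j, cycle_pt (Suc j)} = {Cyc (N - 1), Cyc 0}" by (auto simp: cycle_pt_def)
    then show ?thesis unfolding page_A_def by blast
  qed
qed

lemma spoke_True_edge_on_page:
  assumes "j < N" "t < d"
  shows "consecutive (spoke_pt True j t, spoke_pt True j (Suc t))
    \<or> {spoke_pt True j t, spoke_pt True j (Suc t)} \<in> page_A"
proof (cases "t = 0")
  case True
  then have "{spoke_pt True j t, spoke_pt True j (Suc t)} = {Hub True, spoke_pt True j 1}"
    by (simp add: spoke_pt_def)
  moreover have "{Hub True, spoke_pt True j 1} \<in> page_A"
    using assms(1) unfolding page_A_def by (cases "j = 0") auto
  ultimately show ?thesis by simp
next
  case False
  then show ?thesis
    using assms by (cases "j = 0") (auto intro: consecutiveI1 consecutiveI2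
        simp: book_key_spoke_True book_key_spoke_True_0)
qed

lemma spoke_False_edge_on_page:
  assumes j: "j < N" and t: "t < d"
  shows "consecutive (spoke_pt False j t, spoke_pt False j (Suc t))
    \<or> {spoke_pt False j t, spoke_pt False j (Suc t)} \<in> page_A \<union> page_B"
proof (cases "j = 0")
  case True
  then show ?thesis using t by (auto intro: consecutiveI1 simp: book_key_spoke_False_0)
next
  case j0: False
  consider "t = 0" "2 \<le> d" | "t = 0" "d = 1" | "1 \<le> t" "Suc t < d" | "Suc t = d"
    using t d_ge_1 by linarith
  then show ?thesis
  proof cases
    case 1
    then have "{spoke_pt False j t, spoke_pt False j (Suc t)} = {spoke_pt False j 1, Hub False}"
      by (auto simp: spoke_pt_def)
    moreover have "{spoke_pt False j 1, Hub False} \<in> page_A" unfolding page_A_def using j j0 1 by auto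
    ultimately show ?thesis by simp
  next
    case 2
    then have "{spoke_pt False j t, spoke_pt False j (Suc t)} = {Cyc j, spoke_pt False j (d - 1)}"
      unfolding spoke_pt_def by auto
    moreover have "{Cyc j, spoke_pt False j (d - 1)} \<in> page_B" unfolding page_B_def using j j0 by auto
    ultimately show ?thesis by simp
  next
    case 3
    then show ?thesis using j0 by (auto intro: consecutiveI2 simp: book_key_spoke_False)
  next
    case 4
    then have "{spoke_pt False j t, spoke_pt False j (Suc t)} = {Cyc j, spoke_pt False j (d - 1)}"
      by (auto simp: spoke_pt_def)
    moreover have "{Cyc j, spoke_pt False j (d - 1)} \<in> page_B" unfolding page_B_def using j j0 by auto
    ultimately show ?thesis by simp
  qed
qed

lemma EA_on_pages: "p \<in> EA \<Longrightarrow> consecutive p \<or> {fst p, snd p} \<in> page_A \<union> page_B"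
proof (induction rule: EA_cases)
  case (spoke \<sigma> j t)
  then show ?case
    using spoke_True_edge_on_page spoke_False_edge_on_page by (cases \<sigma>) auto
next
  case (tail i)
  then show ?case by (auto intro: consecutiveI1 simp: book_key_tail_pt)
qed (use cycle_edge_on_page in simp_all)

definition interleave :: "dw_vertex set \<Rightarrow> dw_vertex set \<Rightarrow> bool" where
  "interleave S S' \<longleftrightarrow> (\<exists>a b a' b'. S = {a,b} \<and> S' = {a',b'} \<and> book_pos a < book_pos a' \<and> book_pos a' < book_pos b \<and> book_pos b < book_pos b')"

lemma consecutive_not_interleave: "consecutive (x, y) \<Longrightarrow> \<not> interleave {x,y} S' \<and> \<not> interleave S' {x,y}"
proof -
  assume sh: "consecutive (x, y)"
  have n1: "\<not> interleave {x,y} S'"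
  proof
    assume "interleave {x,y} S'"
    then obtain a b a' b' where ab: "{x,y} = {a,b}" and l: "book_pos a < book_pos a'" "book_pos a' < book_pos b" unfolding interleave_def by blast
    from ab have "(a = x \<and> b = y) \<or> (a = y \<and> b = x)" using l by (auto simp: doubleton_eq_iff)
    then show False using sh l unfolding consecutive_def by auto
  qed
  have n2: "\<not> interleave S' {x,y}"
  proof
    assume "interleave S' {x,y}"
    then obtain a b a' b' where ab: "{x,y} = {a',b'}" and l: "book_pos a' < book_pos b" "book_pos b < book_pos b'" unfolding interleave_def by blast
    from ab have "(a' = x \<and> b' = y) \<or> (a' = y \<and> b' = x)" using l by (auto simp: doubleton_eq_iff)
    then show False using sh l unfolding consecutive_def by auto
  qed
  from n1 n2 show ?thesis by blast
qed

definition keys_interleave :: "nat \<times> nat \<Rightarrow> nat \<times> nat \<Rightarrow> nat \<times> nat \<Rightarrow> nat \<times> nat \<Rightarrow> bool" where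
  "keys_interleave k1 k2 k1' k2' \<longleftrightarrow>
     key_less k1 k1' \<and> key_less k1' k2 \<and> key_less k2 k2' \<or> key_less k2 k1' \<and> key_less k1' k1 \<and> key_less k1 k2' \<or>
     key_less k1 k2' \<and> key_less k2' k2 \<and> key_less k2 k1' \<or> key_less k2 k2' \<and> key_less k2' k1 \<and> key_less k1 k1'"

lemma interleave_keys: "x \<in> VA \<Longrightarrow> y \<in> VA \<Longrightarrow> x' \<in> VA \<Longrightarrow> y' \<in> VA \<Longrightarrow> interleave {x,y} {x',y'} \<Longrightarrow> keys_interleave (book_key x) (book_key y) (book_key x') (book_key y')"
proof -
  assume v: "x \<in> VA" "y \<in> VA" "x' \<in> VA" "y' \<in> VA" and "interleave {x,y} {x',y'}"
  then obtain a b a' b' where ab: "{x,y} = {a,b}" "{x',y'} = {a',b'}" and l: "book_pos a < book_pos a'" "book_pos a' < book_pos b" "book_pos b < book_pos b'"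
    unfolding interleave_def by blast
  have L: "\<And>p q. p \<in> VA \<Longrightarrow> q \<in> VA \<Longrightarrow> book_pos p < book_pos q \<Longrightarrow> key_less (book_key p) (book_key q)"
    using book_pos_less_iff by blast
  from ab(1) have o1: "(a = x \<and> b = y) \<or> (a = y \<and> b = x)" using l by (auto simp: doubleton_eq_iff)
  from ab(2) have o2: "(a' = x' \<and> b' = y') \<or> (a' = y' \<and> b' = x')" using l by (auto simp: doubleton_eq_iff)
  from o1 o2 show ?thesis unfolding keys_interleave_def using L[OF _ _ l(1)] L[OF _ _ l(2)] L[OF _ _ l(3)] v by auto
qed

definition page_A_keys :: "((nat \<times> nat) \<times> (nat \<times> nat)) set" where
  "page_A_keys = {((0,P),(j,1)) | j. 1 \<le> j \<and> j < N} \<union> {((0,P),(2*N-1,2*d-1))}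
      \<union> {((2*N-1-j,d-1),(2*N-1,0)) | j. 1 \<le> j \<and> j < N \<and> 2 \<le> d} \<union> {((N-1,d),(2*N-1,d))}"
definition page_B_keys :: "((nat \<times> nat) \<times> (nat \<times> nat)) set" where
  "page_B_keys = {((j,d),(Suc j,d)) | j. 1 \<le> j \<and> Suc j < N} \<union> {((2*N-1,d),(1,d))}
      \<union> {((j,d), (if d = 1 then (2*N-1,0) else (2*N-1-j,1))) | j. 1 \<le> j \<and> j < N}"

lemma page_A_keys_no_interleave: "p \<in> page_A_keys \<Longrightarrow> q \<in> page_A_keys \<Longrightarrow> \<not> keys_interleave (fst p) (snd p) (fst q) (snd q)"
  using d_ge_1 unfolding page_A_keys_def
  by (elim UnE CollectE exE conjE insertE emptyE) (auto simp: keys_interleave_def key_less_def)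

lemma page_B_keys_no_interleave: "p \<in> page_B_keys \<Longrightarrow> q \<in> page_B_keys \<Longrightarrow> \<not> keys_interleave (fst p) (snd p) (fst q) (snd q)"
  using d_ge_1 unfolding page_B_keys_def
  by (elim UnE CollectE exE conjE insertE emptyE) (auto simp: keys_interleave_def key_less_def split: if_splits)

lemma page_A_keys_of: "S \<in> page_A \<Longrightarrow> \<exists>x y. x \<in> VA \<and> y \<in> VA \<and> S = {x,y} \<and> (book_key x, book_key y) \<in> page_A_keys"
proof -
  assume "S \<in> page_A"
  then consider (a1) j where "1 \<le> j" "j < N" "S = {Hub True, spoke_pt True j 1}" | (a2) "S = {Hub True, spoke_pt True 0 1}"
    | (a3) j where "1 \<le> j" "j < N" "2 \<le> d" "S = {spoke_pt False j 1, Hub False}" | (a4) "S = {Cyc (N - 1), Cyc 0}"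
    unfolding page_A_def by blast
  then show ?thesis
  proof cases
    case a1
    have "book_key (spoke_pt True j 1) = (j, 1)" using a1 d_ge_1 by (simp add: book_key_spoke_True)
    moreover have "book_key (Hub True) = (0, P)" by (simp add: book_key_def)
    moreover have "spoke_pt True j 1 \<in> VA" by (rule spoke_pt_in_VA) (use a1 d_ge_1 in auto)
    moreover have "Hub True \<in> VA" by (simp add: VA_iff)
    ultimately show ?thesis using a1 unfolding page_A_keys_def by blast
  next
    case a2
    have "book_key (spoke_pt True 0 1) = (2*N-1, 2*d-1)" using d_ge_1 by (simp add: book_key_spoke_True_0)
    moreover have "book_key (Hub True) = (0, P)" by (simp add: book_key_def)
    moreover have "spoke_pt True 0 1 \<in> VA" by (rule spoke_pt_in_VA) (use d_ge_1 in auto)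
    moreover have "Hub True \<in> VA" by (simp add: VA_iff)
    ultimately show ?thesis using a2 unfolding page_A_keys_def by blast
  next
    case a3
    have "book_key (spoke_pt False j 1) = (2*N-1-j, d-1)" using a3 by (simp add: book_key_spoke_False)
    moreover have "book_key (Hub False) = (2*N-1, 0)" by (simp add: book_key_def)
    moreover have "spoke_pt False j 1 \<in> VA" by (rule spoke_pt_in_VA) (use a3 in auto)
    moreover have "Hub False \<in> VA" by (simp add: VA_iff)
    ultimately show ?thesis using a3 unfolding page_A_keys_def by blast
  next
    case a4
    have "book_key (Cyc (N - 1)) = (N - 1, d)" "book_key (Cyc 0) = (2*N-1, d)" using d_ge_1 by (auto simp: book_key_def)
    moreover have "Cyc (N - 1) \<in> VA" "Cyc 0 \<in> VA" using d_ge_1 by (auto simp: VA_iff)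
    ultimately show ?thesis using a4 unfolding page_A_keys_def by blast
  qed
qed

lemma page_B_keys_of: "S \<in> page_B \<Longrightarrow> \<exists>x y. x \<in> VA \<and> y \<in> VA \<and> S = {x,y} \<and> (book_key x, book_key y) \<in> page_B_keys"
proof -
  assume "S \<in> page_B"
  then consider (b1) j where "1 \<le> j" "Suc j < N" "S = {Cyc j, Cyc (Suc j)}" | (b2) "S = {Cyc 0, Cyc 1}"
    | (b3) j where "1 \<le> j" "j < N" "S = {Cyc j, spoke_pt False j (d - 1)}"
    unfolding page_B_def by blast
  then show ?thesis
  proof cases
    case b1
    have "book_key (Cyc j) = (j, d)" "book_key (Cyc (Suc j)) = (Suc j, d)" using b1 by (auto simp: book_key_def)
    moreover have "Cyc j \<in> VA" "Cyc (Suc j) \<in> VA" using b1 by (auto simp: VA_iff)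
    ultimately show ?thesis using b1 unfolding page_B_keys_def by blast
  next
    case b2
    have "book_key (Cyc 0) = (2*N-1, d)" "book_key (Cyc 1) = (1, d)" by (auto simp: book_key_def)
    moreover have "Cyc 0 \<in> VA" "Cyc 1 \<in> VA" using d_ge_1 by (auto simp: VA_iff)
    ultimately show ?thesis using b2 unfolding page_B_keys_def by blast
  next
    case b3
    have k1: "book_key (Cyc j) = (j, d)" using b3 by (auto simp: book_key_def)
    have k2: "book_key (spoke_pt False j (d - 1)) = (if d = 1 then (2*N-1,0) else (2*N-1-j,1))"
    proof (cases "d = 1")
      case True
      then have e: "spoke_pt False j (d - 1) = Hub False" unfolding spoke_pt_def by simp
      have "book_key (spoke_pt False j (d - 1)) = book_key (Hub False)" unfolding e ..
      also have "\<dots> = (2*N-1, 0)" by (simp add: book_key_def)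
      also have "\<dots> = (if d = 1 then (2*N-1,0) else (2*N-1-j,1))" using True by simp
      finally show ?thesis .
    next
      case False
      then have "book_key (spoke_pt False j (d - 1)) = (2*N-1-j, d - (d - 1))" using b3 d_ge_1 by (intro book_key_spoke_False) auto
      then show ?thesis using False d_ge_1 by simp
    qed
    have "Cyc j \<in> VA" using b3 by (simp add: VA_iff)
    moreover have "spoke_pt False j (d - 1) \<in> VA" by (rule spoke_pt_in_VA) (use b3 in auto)
    ultimately have "Cyc j \<in> VA" "spoke_pt False j (d - 1) \<in> VA" by blast+
    then show ?thesis using b3 k1 k2 unfolding page_B_keys_def by blast
  qed
qed

lemma page_A_no_interleave: "S \<in> page_A \<Longrightarrow> S' \<in> page_A \<Longrightarrow> \<not> interleave S S'"
proof
  assume "S \<in> page_A" "S' \<in> page_A" "interleave S S'"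
  from page_A_keys_of[OF \<open>S \<in> page_A\<close>] obtain x y where xy: "x \<in> VA" "y \<in> VA" "S = {x,y}" "(book_key x, book_key y) \<in> page_A_keys" by blast
  from page_A_keys_of[OF \<open>S' \<in> page_A\<close>] obtain x' y' where xy': "x' \<in> VA" "y' \<in> VA" "S' = {x',y'}" "(book_key x', book_key y') \<in> page_A_keys" by blast
  have "keys_interleave (book_key x) (book_key y) (book_key x') (book_key y')" using interleave_keys[OF xy(1,2) xy'(1,2)] \<open>interleave S S'\<close> xy(3) xy'(3) by simp
  then show False using page_A_keys_no_interleave[OF xy(4) xy'(4)] by simp
qed

lemma page_B_no_interleave: "S \<in> page_B \<Longrightarrow> S' \<in> page_B \<Longrightarrow> \<not> interleave S S'"
proof
  assume "S \<in> page_B" "S' \<in> page_B" "interleave S S'"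
  from page_B_keys_of[OF \<open>S \<in> page_B\<close>] obtain x y where xy: "x \<in> VA" "y \<in> VA" "S = {x,y}" "(book_key x, book_key y) \<in> page_B_keys" by blast
  from page_B_keys_of[OF \<open>S' \<in> page_B\<close>] obtain x' y' where xy': "x' \<in> VA" "y' \<in> VA" "S' = {x',y'}" "(book_key x', book_key y') \<in> page_B_keys" by blast
  have "keys_interleave (book_key x) (book_key y) (book_key x') (book_key y')" using interleave_keys[OF xy(1,2) xy'(1,2)] \<open>interleave S S'\<close> xy(3) xy'(3) by simp
  then show False using page_B_keys_no_interleave[OF xy(4) xy'(4)] by simp
qed

lemma interleave_if_crosses:
  assumes "crosses (\<lambda>n. real (book_pos (from_nat n))) (enc_edge p) (enc_edge q)"
  shows "interleave {fst p, snd p} {fst q, snd q}"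
proof -
  from assms obtain x y x' y' where c: "enc_edge p = {x, y}" "enc_edge q = {x', y'}"
    "book_pos (from_nat x) < book_pos (from_nat x')" "book_pos (from_nat x') < book_pos (from_nat y)"
    "book_pos (from_nat y) < book_pos (from_nat y')"
    unfolding crosses_def by auto
  have "{fst p, snd p} = from_nat ` enc_edge p" "{fst q, snd q} = from_nat ` enc_edge q"
    unfolding enc_edge_def by simp_all
  then show ?thesis unfolding interleave_def c(1,2) using c(3-5) by auto
qed

lemma EA_no_interleave:
  assumes "p \<in> EA" "q \<in> EA" "{fst p, snd p} \<in> page_B \<longleftrightarrow> {fst q, snd q} \<in> page_B"
  shows "\<not> interleave {fst p, snd p} {fst q, snd q}"
proof
  assume cr: "interleave {fst p, snd p} {fst q, snd q}"
  then have "\<not> consecutive p" "\<not> consecutive q"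
    using consecutive_not_interleave[of "fst p" "snd p"] consecutive_not_interleave[of "fst q" "snd q"] by auto
  then have "{fst p, snd p} \<in> page_A \<union> page_B" "{fst q, snd q} \<in> page_A \<union> page_B"
    using EA_on_pages assms(1,2) by blast+
  then show False
    using cr assms(3) page_A_no_interleave page_B_no_interleave by blast
qed

lemma planar_VE: "planar V E"
proof (rule book_embedding_planar[OF graph_VE,
      where pos = "\<lambda>n. real (book_pos (from_nat n))" and pg = "\<lambda>e. from_nat ` e \<in> page_B"])
  show "inj_on (\<lambda>n. real (book_pos (from_nat n))) V"
    using inj_on_book_pos unfolding V_def inj_on_def by auto
next
  fix e e' assume "e \<in> E" "e' \<in> E" and pg: "(from_nat ` e \<in> page_B) = (from_nat ` e' \<in> page_B)"
  then obtain p q where "p \<in> EA" "q \<in> EA" "e = enc_edge p" "e' = enc_edge q" unfolding E_def by auto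
  moreover have "from_nat ` enc_edge p = {fst p, snd p}" "from_nat ` enc_edge q = {fst q, snd q}"
    unfolding enc_edge_def by simp_all
  ultimately show "\<not> crosses (\<lambda>n. real (book_pos (from_nat n))) e e'"
    using pg EA_no_interleave interleave_if_crosses by metis
qed

end

lemma double_wheel_size_le:
  fixes n d :: nat
  assumes "1 \<le> d" and "real d \<le> sqrt (real n) / 3"
  shows "3 * d + 2 * (3 * d * (d - 1)) + 2 \<le> n"
proof -
  have "real (3 * d) \<le> sqrt (real n)" using assms(2) by simp
  then have "real ((3 * d) ^ 2) \<le> real n"
    using power_mono[of "real (3 * d)" "sqrt (real n)" 2] by simp
  moreover have "3 * d + 2 * (3 * d * (d - 1)) + 2 \<le> (3 * d) ^ 2"
    using assms(1) by (cases d) (simp_all add: algebra_simps power2_eq_square)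
  ultimately show ?thesis by linarith
qed

theorem corollary1:
  fixes n d :: nat
  assumes "1 \<le> d" and "real d \<le> sqrt (real n) / 3"
  shows "\<exists>(V :: nat set) E u v rt.
           graph V E \<and> connected_graph V E \<and> planar V E \<and> card V = n \<and>
           u \<in> V \<and> v \<in> V \<and> gdist E u v = d \<and>
           valid_root_rule V E rt \<and>
           (\<forall>R::nat. R > 2 * d \<longrightarrow>
              kpr_sep_prob V E R rt u v \<le> 8 * (real (gdist E u v) / real R) ^ 4)"
proof -
  define P where "P = n - (3 * d + 2 * (3 * d * (d - 1)) + 2)"
  interpret G: double_wheel d P using assms(1) by unfold_locales
  have "card G.V = n"
    using G.card_V double_wheel_size_le[OF assms] unfolding P_def by simp
  then show ?thesis
    using G.graph_VE G.connected_VE G.planar_VE G.u0_in_V G.v0_in_V G.gdist_u0_v0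
      G.valid_root_rule G.kpr_sep_prob_le
    by (intro exI[of _ G.V] exI[of _ G.E] exI[of _ G.u0] exI[of _ G.v0] exI[of _ G.root_rule]) simp
qed

end
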